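(* Let $1<p<\infty$, $q=\frac{p}{p-1}$, $0\le\beta<1-\frac1p$, let $f\in L^p$, let $\omega$ be a function of modulus of continuity type, and let $x$ be a fixed real number. Suppose that for all $n\ge 1$ \[ \sum_{m=1}^{n}(m+1)^{\beta+1-\frac{2}{q}}\left\{\int_{\frac{\pi}{m+1}}^{\frac{\pi}{m}}\left(\frac{|\varphi_x(t)|}{\omega(t)}\right)^{p}\sin^{\beta p}\frac{t}{2}\,dt\right\}^{1/p}=O_x\!\left((n+1)^{\beta}\right) \] and \[ \left\{\int_{0}^{\frac{2\pi}{n}}\left(\frac{|\varphi_x(t)|}{\omega(t)}\right)^{p}\sin^{\beta p}\frac{t}{2}\,dt\right\}^{1/p}=O_x\!\left((n+1)^{-1/p}\right). \] If the matrix $A=(a_{n,k})$ satisfies the $MRBVS$ condition, then \[ |T_{n,A}f(x)-f(x)|=O_x\!\left((n+1)^{\beta}\sum_{k=0}^{n}a_{n,k}\,\omega\!\left(\frac{\pi}{k+1}\right)\right), \] and if $A$ satisfies the $MHBVS$ condition, then \[ |T_{n,A}f(x)-f(x)|=O_x\!\left((n+1)^{\beta}\sum_{k=0}^{n}a_{n,n-k}\,\omega\!\left(\frac{\pi}{k+1}\right)\right). \]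
   Context: $L^p$ ($1\le p<\infty$) is the class of $2\pi$-periodic real functions Lebesgue integrable with $p$-th power over $[-\pi,\pi]$. $S_kf$ denotes the $k$-th partial sum of the trigonometric Fourier series of $f$. $A=(a_{n,k})$ is an infinite lower triangular real matrix with $a_{n,k}\ge0$ for $0\le k\le n$, $a_{n,k}=0$ for $k>n$, and $\sum_{k=0}^n a_{n,k}=1$ for every $n$; $T_{n,A}f(x)=\sum_{k=0}^n a_{n,k}S_kf(x)$. $\varphi_x(t)=f(x+t)+f(x-t)-2f(x)$. A function $\omega$ of modulus of continuity type on $[0,2\pi]$ is a nondecreasing continuous function with $\omega(0)=0$ and $\omega(\delta_1+\delta_2)\le\omega(\delta_1)+\omega(\delta_2)$ for $0\le\delta_1\le\delta_2\le\delta_1+\delta_2\le2\pi$ (implicitly positive on $(0,2\pi]$). "$A$ satisfies the $MRBVS$ condition" means: there is a constant $K$ such that for all $n$ and all $0\le m<n$, $\sum_{k=m}^{n-1}|a_{n,k}-a_{n,k+1}|\le K\frac{1}{m+1}\sum_{m/2\le k\le m}a_{n,k}$. "$A$ satisfies the $MHBVS$ condition" means: there is a constant $K$ such that for all $n$ and all $0\le m<n$, $\sum_{k=0}^{n-m-1}|a_{n,k}-a_{n,k+1}|\le K\frac1{m+1}\sum_{k=n-m}^{n}a_{n,k}$. $O_x(\cdot)$ means bounded by a constant (possibly depending on $x$) times the indicated quantity, uniformly in $n$. *)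

theory Defs
  imports "HOL-Analysis.Analysis"
begin

definition Lp_periodic :: "real \<Rightarrow> (real \<Rightarrow> real) \<Rightarrow> bool" where
  "Lp_periodic p f \<longleftrightarrow> f \<in> borel_measurable lborel \<and> (\<forall>t. f (t + 2*pi) = f t)
     \<and> set_integrable lborel {-pi..pi} (\<lambda>t. \<bar>f t\<bar> powr p)"

definition fourier_a :: "(real \<Rightarrow> real) \<Rightarrow> nat \<Rightarrow> real" where
  "fourier_a f j = (LBINT t=-pi..pi. f t * cos (real j * t)) / pi"

definition fourier_b :: "(real \<Rightarrow> real) \<Rightarrow> nat \<Rightarrow> real" where
  "fourier_b f j = (LBINT t=-pi..pi. f t * sin (real j * t)) / pi"

definition partial_sum :: "(real \<Rightarrow> real) \<Rightarrow> nat \<Rightarrow> real \<Rightarrow> real" where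
  "partial_sum f k x = fourier_a f 0 / 2
     + (\<Sum>j=1..k. fourier_a f j * cos (real j * x) + fourier_b f j * sin (real j * x))"

definition T_mean :: "(nat \<Rightarrow> nat \<Rightarrow> real) \<Rightarrow> (real \<Rightarrow> real) \<Rightarrow> nat \<Rightarrow> real \<Rightarrow> real" where
  "T_mean a f n x = (\<Sum>k=0..n. a n k * partial_sum f k x)"

definition phi :: "(real \<Rightarrow> real) \<Rightarrow> real \<Rightarrow> real \<Rightarrow> real" where
  "phi f x t = f (x + t) + f (x - t) - 2 * f x"

definition modulus_type :: "(real \<Rightarrow> real) \<Rightarrow> bool" where
  "modulus_type \<omega> \<longleftrightarrow> mono_on {0..2*pi} \<omega> \<and> continuous_on {0..2*pi} \<omega> \<and> \<omega> 0 = 0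
     \<and> (\<forall>d1 d2. 0 \<le> d1 \<and> d1 \<le> d2 \<and> d1 + d2 \<le> 2*pi \<longrightarrow> \<omega> (d1 + d2) \<le> \<omega> d1 + \<omega> d2)
     \<and> (\<forall>d. 0 < d \<and> d \<le> 2*pi \<longrightarrow> 0 < \<omega> d)"

definition lower_tri_stoch :: "(nat \<Rightarrow> nat \<Rightarrow> real) \<Rightarrow> bool" where
  "lower_tri_stoch a \<longleftrightarrow> (\<forall>n k. k \<le> n \<longrightarrow> 0 \<le> a n k) \<and> (\<forall>n k. n < k \<longrightarrow> a n k = 0)
     \<and> (\<forall>n. (\<Sum>k=0..n. a n k) = 1)"

definition MRBVS :: "(nat \<Rightarrow> nat \<Rightarrow> real) \<Rightarrow> bool" where
  "MRBVS a \<longleftrightarrow> (\<exists>K. \<forall>n m. m < n \<longrightarrow>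
     (\<Sum>k=m..n-1. \<bar>a n k - a n (k+1)\<bar>)
       \<le> K * (1 / real (m+1)) * (\<Sum>k\<in>{k. real m / 2 \<le> real k \<and> k \<le> m}. a n k))"

definition MHBVS :: "(nat \<Rightarrow> nat \<Rightarrow> real) \<Rightarrow> bool" where
  "MHBVS a \<longleftrightarrow> (\<exists>K. \<forall>n m. m < n \<longrightarrow>
     (\<Sum>k=0..n-m-1. \<bar>a n k - a n (k+1)\<bar>)
       \<le> K * (1 / real (m+1)) * (\<Sum>k=n-m..n. a n k))"

definition wint :: "real \<Rightarrow> real \<Rightarrow> (real \<Rightarrow> real) \<Rightarrow> (real \<Rightarrow> real) \<Rightarrow> real \<Rightarrow> real \<Rightarrow> real \<Rightarrow> ennreal" where
  "wint p \<beta> f \<omega> x u v = (\<integral>\<^sup>+ t. indicator {u..v} t *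
      ennreal ((\<bar>phi f x t\<bar> / \<omega> t) powr p * (sin (t/2)) powr (\<beta> * p)) \<partial>lborel)"

end

theory Submission
  imports Defs
begin

text \<open>
  Since the rows of \<open>A\<close> sum to \<open>1\<close>, \<open>T_n f(x) - f(x) = (1/\<pi>) \<integral>[0,\<pi>] \<phi>_x(t) K_n(t) dt\<close> with the
  mean \<open>K_n = \<Sum>_k a_{n,k} D_k\<close> of the Dirichlet kernels. Split \<open>[0, \<pi>]\<close> into \<open>[0, \<pi>/(n+1)]\<close> and
  the blocks \<open>[\<pi>/(m+1), \<pi>/m]\<close>, \<open>1 \<le> m \<le> n\<close>. On the first piece \<open>|K_n| \<le> n + 1\<close>. On the
  \<open>m\<close>-th block \<open>2 sin(t/2) K_n(t) = \<Sum>_k a_{n,k} sin((k + 1/2) t)\<close>, and summation by parts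
  together with the MRBVS (resp. MHBVS) condition bounds this by a constant times the mass
  \<open>G(m)\<close> of the first (resp. last) \<open>m + 1\<close> entries of the row. Writing
  \<open>|\<phi>_x(t)| = (|\<phi>_x(t)| / \<omega>(t)) sin^\<beta>(t/2) \<cdot> \<omega>(t) sin^-\<beta>(t/2)\<close> and applying Hoelder's
  inequality on every piece turns the two hypotheses into a bound by \<open>(n+1)^\<beta>\<close> times
  \<open>\<omega>(\<pi>/(n+1))\<close> and the \<open>\<omega>(\<pi>/m) G(m)\<close>; as \<open>\<omega>(2u) \<le> 2 \<omega>(u)\<close>, these are at most twice the
  weighted sum \<open>\<Sum>_k a_{n,k} \<omega>(\<pi>/(k+1))\<close> (resp. its version with the row reversed).
\<close>

section \<open>Dirichlet kernels\<close>

definition dirichlet_kernel :: "nat \<Rightarrow> real \<Rightarrow> real" where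
  "dirichlet_kernel k t = 1/2 + (\<Sum>j=1..k. cos (real j * t))"

lemma sin_half_mult_dirichlet_kernel:
  "2 * sin (t/2) * dirichlet_kernel k t = sin ((real k + 1/2) * t)"
proof (induction k)
  case 0
  then show ?case by (simp add: dirichlet_kernel_def)
next
  case (Suc k)
  have "dirichlet_kernel (Suc k) t = dirichlet_kernel k t + cos (real (Suc k) * t)"
    by (simp add: dirichlet_kernel_def)
  moreover have "2 * sin (t/2) * cos A = sin (A + t/2) - sin (A - t/2)" for A
    by (simp add: sin_add sin_diff)
  moreover have "real (Suc k) * t + t/2 = (real (Suc k) + 1/2) * t"
    and "real (Suc k) * t - t/2 = (real k + 1/2) * t"
    by (simp_all add: algebra_simps)
  ultimately show ?case
    using Suc by (simp add: distrib_left)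
qed

lemma abs_dirichlet_kernel_le: "\<bar>dirichlet_kernel k t\<bar> \<le> real k + 1/2"
proof -
  have "\<bar>\<Sum>j=1..k. cos (real j * t)\<bar> \<le> (\<Sum>j=1..k. 1)"
    by (rule order_trans[OF sum_abs sum_mono]) simp
  then show ?thesis
    unfolding dirichlet_kernel_def by simp
qed

lemma dirichlet_kernel_periodic: "dirichlet_kernel k (t + 2*pi) = dirichlet_kernel k t"
proof -
  have "cos (real j * (t + 2*pi)) = cos (real j * t)" for j
  proof -
    have "real j * (t + 2*pi) = real j * t + 2 * real j * pi"
      by (simp add: algebra_simps)
    then show ?thesis
      by (simp add: cos_add)
  qed
  then show ?thesis
    by (simp add: dirichlet_kernel_def)
qed

lemma dirichlet_kernel_minus: "dirichlet_kernel k (- t) = dirichlet_kernel k t"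
  by (simp add: dirichlet_kernel_def)

lemma continuous_on_dirichlet_kernel: "continuous_on A (dirichlet_kernel k)"
  unfolding dirichlet_kernel_def by (intro continuous_intros)

lemma borel_measurable_dirichlet_kernel [measurable]:
  "dirichlet_kernel k \<in> borel_measurable borel"
  by (rule borel_measurable_continuous_onI[OF continuous_on_dirichlet_kernel])

definition mean_dirichlet_kernel :: "(nat \<Rightarrow> real) \<Rightarrow> nat \<Rightarrow> real \<Rightarrow> real" where
  "mean_dirichlet_kernel w n t = (\<Sum>k=0..n. w k * dirichlet_kernel k t)"

lemma sin_half_mult_mean_dirichlet_kernel:
  "2 * sin (t/2) * mean_dirichlet_kernel w n t = (\<Sum>k=0..n. w k * sin ((real k + 1/2) * t))"
  unfolding mean_dirichlet_kernel_def sum_distrib_left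
proof (rule sum.cong)
  fix k
  show "2 * sin (t/2) * (w k * dirichlet_kernel k t) = w k * sin ((real k + 1/2) * t)"
    by (subst sin_half_mult_dirichlet_kernel[symmetric]) (simp add: algebra_simps)
qed simp

lemma abs_mean_dirichlet_kernel_le:
  assumes "\<And>k. 0 \<le> w k" "(\<Sum>k=0..n. w k) = 1"
  shows "\<bar>mean_dirichlet_kernel w n t\<bar> \<le> real n + 1"
proof -
  have "\<bar>mean_dirichlet_kernel w n t\<bar> \<le> (\<Sum>k=0..n. w k * (real n + 1))"
    unfolding mean_dirichlet_kernel_def
  proof (rule order_trans[OF sum_abs sum_mono])
    fix k assume "k \<in> {0..n}"
    then have "\<bar>dirichlet_kernel k t\<bar> \<le> real n + 1"
      using abs_dirichlet_kernel_le[of k t] by simp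
    then show "\<bar>w k * dirichlet_kernel k t\<bar> \<le> w k * (real n + 1)"
      using assms(1)[of k] by (simp add: abs_mult mult_left_mono)
  qed
  then show ?thesis
    using assms(2) by (simp add: sum_distrib_right[symmetric])
qed

lemma borel_measurable_mean_dirichlet_kernel [measurable]:
  "mean_dirichlet_kernel w n \<in> borel_measurable borel"
  unfolding mean_dirichlet_kernel_def by measurable

lemma sin_half_mult_sum_sin:
  assumes "m \<le> k"
  shows "2 * sin (t/2) * (\<Sum>j=m..<k. sin ((real j + 1/2) * t)) = cos (real m * t) - cos (real k * t)"
proof -
  have "2 * sin (t/2) * sin A = cos (A - t/2) - cos (A + t/2)" for A
    by (simp add: cos_add cos_diff)
  moreover have "(real j + 1/2) * t - t/2 = real j * t" "(real j + 1/2) * t + t/2 = real (Suc j) * t" for j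
    by (simp_all add: algebra_simps)
  ultimately have "2 * sin (t/2) * sin ((real j + 1/2) * t) = - cos (real (Suc j) * t) - - cos (real j * t)" for j
    by simp
  then show ?thesis
    using sum_Suc_diff'[OF assms, of "\<lambda>j. - cos (real j * t)"] by (simp add: sum_distrib_left)
qed

lemma abs_sum_sin_half_le:
  assumes "0 < sin (t/2)"
  shows "\<bar>\<Sum>j=m..k. sin ((real j + 1/2) * t)\<bar> \<le> 1 / sin (t/2)"
proof (cases "m \<le> Suc k")
  case True
  have "\<bar>2 * sin (t/2) * (\<Sum>j=m..<Suc k. sin ((real j + 1/2) * t))\<bar> \<le> 2"
    unfolding sin_half_mult_sum_sin[OF True] abs_le_iff
    using cos_le_one[of "real m * t"] cos_ge_minus_one[of "real m * t"]
      cos_le_one[of "real (Suc k) * t"] cos_ge_minus_one[of "real (Suc k) * t"] by linarith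
  then show ?thesis
    using assms by (simp add: atLeastLessThanSuc_atLeastAtMost abs_mult field_simps)
next
  case False
  then show ?thesis
    using assms by simp
qed

text \<open>Jordan's inequality, by concavity of \<open>sin\<close> on \<open>[0, \<pi>]\<close>.\<close>

lemma sin_half_ge:
  assumes "0 \<le> t" "t \<le> pi"
  shows "t / pi \<le> sin (t/2)"
proof -
  have "convex_on {0..pi} (\<lambda>y. - sin y)"
    by (rule f''_ge0_imp_convex[where f'="\<lambda>y. - cos y" and f''="\<lambda>y. sin y"])
      (auto intro!: derivative_eq_intros sin_ge_zero)
  then have "- sin ((1 - t/pi) *\<^sub>R 0 + (t/pi) *\<^sub>R (pi/2)) \<le> (1 - t/pi) * (- sin 0) + (t/pi) * (- sin (pi/2))"
    by (rule convex_onD) (use assms in \<open>auto simp: field_simps\<close>)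
  then show ?thesis
    by simp
qed

lemma abs_mean_dirichlet_kernel_le_on_block:
  assumes m: "1 \<le> m" and t: "pi / real (m+1) \<le> t" "t \<le> pi / real m"
    and kernel: "0 < sin (t/2) \<Longrightarrow> 1 / sin (t/2) \<le> real m + 1 \<Longrightarrow>
      \<bar>\<Sum>k=0..n. w k * sin ((real k + 1/2) * t)\<bar> \<le> E"
  shows "\<bar>mean_dirichlet_kernel w n t\<bar> \<le> E * real (m+1) / 2"
proof -
  have "0 < pi / real (m+1)" "pi / real m \<le> pi"
    using m by (simp_all add: field_simps)
  have "1 / real (m+1) = pi / real (m+1) / pi"
    by simp
  also have "\<dots> \<le> t / pi"
    using t(1) by (rule divide_right_mono) simp
  also have "\<dots> \<le> sin (t/2)"
    by (intro sin_half_ge; use t \<open>0 < pi / real (m+1)\<close> \<open>pi / real m \<le> pi\<close> in linarith)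
  finally have "1 / real (m+1) \<le> sin (t/2)" .
  moreover have "0 < 1 / real (m+1)"
    by simp
  ultimately have sin_pos: "0 < sin (t/2)"
    by linarith
  have "1 / sin (t/2) \<le> 1 / (1 / real (m+1))"
    using \<open>1 / real (m+1) \<le> sin (t/2)\<close> sin_pos by (intro divide_left_mono) auto
  then have sin_ge: "1 / sin (t/2) \<le> real m + 1"
    by simp
  have "2 * sin (t/2) * \<bar>mean_dirichlet_kernel w n t\<bar> \<le> E"
    using kernel[OF sin_pos sin_ge] sin_pos sin_half_mult_mean_dirichlet_kernel[of t w n] by (simp add: abs_mult)
  then have "\<bar>mean_dirichlet_kernel w n t\<bar> \<le> E * (1 / sin (t/2)) / 2"
    using sin_pos by (simp add: field_simps)
  also have "\<dots> \<le> E * real (m+1) / 2"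
    using sin_ge order_trans[OF abs_ge_zero kernel[OF sin_pos sin_ge]]
    by (intro divide_right_mono mult_left_mono) auto
  finally show ?thesis .
qed

section \<open>Rows of bounded variation\<close>

lemma summation_by_parts:
  fixes b z :: "nat \<Rightarrow> 'a::comm_ring"
  assumes "m \<le> n"
  shows "(\<Sum>k=m..n. b k * z k)
    = (\<Sum>k=m..<n. (b k - b (Suc k)) * (\<Sum>j=m..k. z j)) + b n * (\<Sum>j=m..n. z j)"
  using assms
proof (induction n rule: dec_induct)
  case (step n)
  then show ?case
    by (simp add: algebra_simps)
qed simp

lemma abs_summation_by_parts_le:
  fixes b z :: "nat \<Rightarrow> real"
  assumes "m \<le> n" "0 \<le> b n" and partial: "\<And>k. m \<le> k \<Longrightarrow> k \<le> n \<Longrightarrow> \<bar>\<Sum>j=m..k. z j\<bar> \<le> B"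
  shows "\<bar>\<Sum>k=m..n. b k * z k\<bar> \<le> B * ((\<Sum>k=m..<n. \<bar>b k - b (Suc k)\<bar>) + b n)"
proof -
  have "\<bar>\<Sum>k=m..<n. (b k - b (Suc k)) * (\<Sum>j=m..k. z j)\<bar> \<le> (\<Sum>k=m..<n. \<bar>b k - b (Suc k)\<bar> * B)"
    by (rule order_trans[OF sum_abs sum_mono]) (auto simp: abs_mult intro!: mult_left_mono partial)
  moreover have "\<bar>b n * (\<Sum>j=m..n. z j)\<bar> \<le> b n * B"
    using assms by (simp add: abs_mult mult_left_mono)
  ultimately show ?thesis
    unfolding summation_by_parts[OF assms(1)]
    by (simp add: algebra_simps sum_distrib_left abs_triangle_ineq order_trans[OF abs_triangle_ineq])
qed

lemma abs_diff_le_variation: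
  fixes b :: "nat \<Rightarrow> real"
  assumes "i \<le> N"
  shows "\<bar>b N - b i\<bar> \<le> (\<Sum>k=i..<N. \<bar>b k - b (Suc k)\<bar>)"
proof -
  have "\<bar>b N - b i\<bar> = \<bar>\<Sum>k=i..<N. b (Suc k) - b k\<bar>"
    by (simp add: sum_Suc_diff'[OF assms])
  also have "\<dots> \<le> (\<Sum>k=i..<N. \<bar>b k - b (Suc k)\<bar>)"
    by (rule order_trans[OF sum_abs]) (simp add: abs_minus_commute)
  finally show ?thesis .
qed

lemma abs_sum_mult_sin_le:
  fixes b c :: "'a \<Rightarrow> real"
  assumes "\<And>k. k \<in> A \<Longrightarrow> 0 \<le> b k"
  shows "\<bar>\<Sum>k\<in>A. b k * sin (c k)\<bar> \<le> sum b A"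
proof (rule order_trans[OF sum_abs sum_mono])
  fix k assume "k \<in> A"
  then show "\<bar>b k * sin (c k)\<bar> \<le> b k"
    using assms[of k] abs_sin_le_one[of "c k"] by (simp add: abs_mult mult_left_le)
qed

lemma abs_sum_mult_sin_half_le_variation:
  fixes b :: "nat \<Rightarrow> real"
  assumes "m \<le> n" "0 \<le> b n" "0 < sin (t/2)" "1 / sin (t/2) \<le> M"
  shows "\<bar>\<Sum>k=m..n. b k * sin ((real k + 1/2) * t)\<bar> \<le> M * ((\<Sum>k=m..<n. \<bar>b k - b (Suc k)\<bar>) + b n)"
  by (rule abs_summation_by_parts_le[where b=b and z="\<lambda>k. sin ((real k + 1/2) * t)", OF assms(1,2)])
     (use abs_sum_sin_half_le[OF assms(3)] assms(4) in \<open>blast intro: order_trans\<close>)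

text \<open>Averaging over a block of at least \<open>(m+1)/2\<close> indices: this is how a single coefficient of a
  row is bounded by the mass of the row.\<close>

lemma mult_le_of_le_on_block:
  fixes b :: "nat \<Rightarrow> real" and r :: "nat \<Rightarrow> nat"
  assumes le: "\<And>j. j \<in> J \<Longrightarrow> c \<le> b j + E / real (r j + 1)"
    and r: "\<And>j. j \<in> J \<Longrightarrow> m + 1 \<le> 2 * (r j + 1)"
    and sum: "sum b J \<le> G" and card: "m + 1 \<le> 2 * card J" and "0 \<le> G" "0 \<le> E"
  shows "real (m+1) * c \<le> 2 * G + 2 * E"
proof -
  define d where "d = c - 2 * E / real (m+1)"
  have "d \<le> b j" if "j \<in> J" for j
  proof -
    have "E / real (r j + 1) = 2 * E / (2 * real (r j + 1))"
      by (simp add: field_simps)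
    also have "\<dots> \<le> 2 * E / real (m+1)"
      using r[OF that] \<open>0 \<le> E\<close> by (intro divide_left_mono) auto
    finally show ?thesis
      using le[OF that] unfolding d_def by linarith
  qed
  then have "real (card J) * d \<le> G"
    using sum_bounded_below[of J d b] sum by force
  have "real (m+1) * d \<le> 2 * G"
  proof (cases "0 \<le> d")
    case True
    then have "real (m+1) * d \<le> 2 * real (card J) * d"
      using card by (intro mult_right_mono) auto
    then show ?thesis
      using \<open>real (card J) * d \<le> G\<close> by linarith
  next
    case False
    then have "real (m+1) * d \<le> 0"
      by (simp add: mult_nonneg_nonpos)
    then show ?thesis
      using \<open>0 \<le> G\<close> by linarith
  qed
  moreover have "real (m+1) * (2 * E / real (m+1)) = 2 * E"
    by (simp add: field_simps)
  ultimately show ?thesis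
    unfolding d_def by (simp only: right_diff_distrib)
qed

text \<open>The sum is split at \<open>m\<close>: the part below \<open>m\<close> is bounded termwise, the rest by summation
  by parts, where the last coefficient is estimated through the indices \<open>m/2 \<le> j \<le> m\<close>.\<close>

lemma abs_sum_mult_sin_half_le_rest_variation:
  fixes b :: "nat \<Rightarrow> real"
  assumes nonneg: "\<And>k. 0 \<le> b k" and K: "0 \<le> K"
    and variation: "\<And>j. j < n \<Longrightarrow> (\<Sum>k=j..n-1. \<bar>b k - b (k+1)\<bar>)
      \<le> K * (1 / real (j+1)) * (\<Sum>k\<in>{k. real j / 2 \<le> real k \<and> k \<le> j}. b k)"
    and "m \<le> n" and sin_pos: "0 < sin (t/2)" and sin_ge: "1 / sin (t/2) \<le> real m + 1"
  shows "\<bar>\<Sum>k=0..n. b k * sin ((real k + 1/2) * t)\<bar> \<le> (3 + 3*K) * (\<Sum>k=0..m. b k)"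
proof -
  define G where "G = (\<Sum>k=0..m. b k)"
  have G: "0 \<le> G"
    unfolding G_def by (intro sum_nonneg nonneg)
  have "\<bar>\<Sum>k=0..<m. b k * sin ((real k + 1/2) * t)\<bar> \<le> (\<Sum>k=0..<m. b k)"
    using nonneg by (rule abs_sum_mult_sin_le)
  also have "\<dots> \<le> G"
    unfolding G_def using nonneg by (intro sum_mono2) auto
  finally have head: "\<bar>\<Sum>k=0..<m. b k * sin ((real k + 1/2) * t)\<bar> \<le> G" .
  have rest: "\<bar>\<Sum>k=m..n. b k * sin ((real k + 1/2) * t)\<bar> \<le> (2 + 3*K) * G"
  proof (cases "m = n")
    case True
    have "\<bar>\<Sum>k=m..n. b k * sin ((real k + 1/2) * t)\<bar> \<le> (\<Sum>k=m..n. b k)"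
      using nonneg by (rule abs_sum_mult_sin_le)
    also have "\<dots> \<le> G"
      unfolding G_def using True nonneg by (intro sum_mono2) auto
    also have "\<dots> \<le> (2 + 3*K) * G"
      using G K by (simp add: algebra_simps)
    finally show ?thesis .
  next
    case False
    with \<open>m \<le> n\<close> have "m < n"
      by simp
    have tail: "(\<Sum>k=j..<n. \<bar>b k - b (Suc k)\<bar>) \<le> K * G / real (j+1)" if "j \<le> m" for j
    proof -
      have "{j..n-1} = {j..<n}"
        using that \<open>m < n\<close> by auto
      then have "(\<Sum>k=j..<n. \<bar>b k - b (Suc k)\<bar>)
          \<le> K * (1 / real (j+1)) * (\<Sum>k\<in>{k. real j / 2 \<le> real k \<and> k \<le> j}. b k)"
        using variation[of j] that \<open>m < n\<close> by simp
      also have "\<dots> \<le> K * (1 / real (j+1)) * G"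
        unfolding G_def using that K nonneg by (intro mult_left_mono sum_mono2) auto
      finally show ?thesis
        by simp
    qed
    have last: "real (m+1) * b n \<le> 2 * G + 2 * (K * G)"
    proof (rule mult_le_of_le_on_block[where J="{(m+1) div 2..m}" and r="\<lambda>j. j"])
      show "b n \<le> b j + K * G / real (j + 1)" if "j \<in> {(m+1) div 2..m}" for j
        using abs_diff_le_variation[of j n b] tail[of j] that \<open>m < n\<close> by auto
      show "sum b {(m+1) div 2..m} \<le> G"
        unfolding G_def by (rule sum_mono2) (use nonneg in auto)
    qed (use G K in auto)
    have "\<bar>\<Sum>k=m..n. b k * sin ((real k + 1/2) * t)\<bar>
        \<le> real (m+1) * ((\<Sum>k=m..<n. \<bar>b k - b (Suc k)\<bar>) + b n)"
      by (rule abs_sum_mult_sin_half_le_variation) (use \<open>m \<le> n\<close> nonneg sin_pos sin_ge in auto)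
    also have "\<dots> \<le> K * G + (2 * G + 2 * (K * G))"
    proof -
      have "real (m+1) * (\<Sum>k=m..<n. \<bar>b k - b (Suc k)\<bar>) \<le> K * G"
        using mult_left_mono[OF tail[of m], of "real (m+1)"] by simp
      then show ?thesis
        using last by (simp only: distrib_left)
    qed
    finally show ?thesis
      by (simp add: algebra_simps)
  qed
  have "{0..n} = {0..<m} \<union> {m..n}"
    using \<open>m \<le> n\<close> by auto
  then have "(\<Sum>k=0..n. b k * sin ((real k + 1/2) * t))
      = (\<Sum>k=0..<m. b k * sin ((real k + 1/2) * t)) + (\<Sum>k=m..n. b k * sin ((real k + 1/2) * t))"
    by (simp add: sum.union_disjoint ivl_disj_int)
  then show ?thesis
    using head rest unfolding G_def[symmetric] by (simp add: algebra_simps abs_triangle_ineq order_trans[OF abs_triangle_ineq])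
qed

lemma abs_sum_mult_sin_half_le_head_variation:
  fixes b :: "nat \<Rightarrow> real"
  assumes nonneg: "\<And>k. 0 \<le> b k" and K: "0 \<le> K"
    and variation: "\<And>j. j < n \<Longrightarrow> (\<Sum>k=0..n-j-1. \<bar>b k - b (k+1)\<bar>)
      \<le> K * (1 / real (j+1)) * (\<Sum>k=n-j..n. b k)"
    and "m \<le> n" and sin_pos: "0 < sin (t/2)" and sin_ge: "1 / sin (t/2) \<le> real m + 1"
  shows "\<bar>\<Sum>k=0..n. b k * sin ((real k + 1/2) * t)\<bar> \<le> (3 + 3*K) * (\<Sum>k=n-m..n. b k)"
proof (cases "m = n")
  case True
  have "\<bar>\<Sum>k=0..n. b k * sin ((real k + 1/2) * t)\<bar> \<le> (\<Sum>k=0..n. b k)"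
    using nonneg by (rule abs_sum_mult_sin_le)
  also have "\<dots> \<le> (3 + 3*K) * (\<Sum>k=n-m..n. b k)"
    using True K sum_nonneg[of "{0..n}" b] nonneg by (simp add: algebra_simps)
  finally show ?thesis .
next
  case False
  with \<open>m \<le> n\<close> have "m < n"
    by simp
  define G where "G = (\<Sum>k=n-m..n. b k)"
  define L where "L = n - m - 1"
  have G: "0 \<le> G"
    unfolding G_def by (intro sum_nonneg nonneg)
  have initial: "(\<Sum>k=0..<j. \<bar>b k - b (Suc k)\<bar>) \<le> K * G / real (n-j+1)" if "n - m \<le> j" "j \<le> n" for j
  proof -
    have "n - (n-j) - 1 = j - 1"
      using that by simp
    then have "(\<Sum>k=0..<j. \<bar>b k - b (Suc k)\<bar>) \<le> (\<Sum>k=0..n-(n-j)-1. \<bar>b k - b (Suc k)\<bar>)"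
      by (intro sum_mono2) auto
    also have "\<dots> \<le> K * (1 / real (n-j+1)) * (\<Sum>k=n-(n-j)..n. b k)"
      using variation[of "n-j"] that \<open>m < n\<close> by simp
    also have "\<dots> \<le> K * (1 / real (n-j+1)) * G"
      unfolding G_def using that K nonneg by (intro mult_left_mono sum_mono2) auto
    finally show ?thesis
      by simp
  qed
  have last: "real (m+1) * b L \<le> 2 * G + 2 * (K * G)"
  proof (rule mult_le_of_le_on_block[where J="{n-m..n - m div 2}" and r="\<lambda>j. n - j"])
    show "b L \<le> b j + K * G / real (n - j + 1)" if "j \<in> {n-m..n - m div 2}" for j
    proof -
      from that \<open>m < n\<close> have "n - m \<le> j" "j \<le> n" "L \<le> j"
        unfolding L_def by auto
      moreover have "(\<Sum>k=L..<j. \<bar>b k - b (Suc k)\<bar>) \<le> (\<Sum>k=0..<j. \<bar>b k - b (Suc k)\<bar>)"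
        by (rule sum_mono2) auto
      ultimately show ?thesis
        using abs_diff_le_variation[of L j b] initial[of j] by linarith
    qed
    show "sum b {n-m..n - m div 2} \<le> G"
      unfolding G_def by (rule sum_mono2) (use nonneg in auto)
    show "m + 1 \<le> 2 * card {n-m..n - m div 2}"
      using \<open>m < n\<close> by simp
  qed (use G K \<open>m < n\<close> in auto)
  have "(\<Sum>k=0..<L. \<bar>b k - b (Suc k)\<bar>) \<le> (\<Sum>k=0..<n-m. \<bar>b k - b (Suc k)\<bar>)"
    unfolding L_def by (rule sum_mono2) auto
  also have "\<dots> \<le> K * G / real (m+1)"
    using initial[of "n-m"] \<open>m < n\<close> by simp
  finally have "(\<Sum>k=0..<L. \<bar>b k - b (Suc k)\<bar>) \<le> K * G / real (m+1)" .
  have "\<bar>\<Sum>k=0..L. b k * sin ((real k + 1/2) * t)\<bar>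
      \<le> real (m+1) * ((\<Sum>k=0..<L. \<bar>b k - b (Suc k)\<bar>) + b L)"
    by (rule abs_sum_mult_sin_half_le_variation) (use nonneg sin_pos sin_ge in auto)
  also have "\<dots> \<le> K * G + (2 * G + 2 * (K * G))"
  proof -
    have "real (m+1) * (\<Sum>k=0..<L. \<bar>b k - b (Suc k)\<bar>) \<le> K * G"
      using mult_left_mono[OF \<open>(\<Sum>k=0..<L. \<bar>b k - b (Suc k)\<bar>) \<le> K * G / real (m+1)\<close>, of "real (m+1)"]
      by simp
    then show ?thesis
      using last by (simp only: distrib_left)
  qed
  finally have init: "\<bar>\<Sum>k=0..L. b k * sin ((real k + 1/2) * t)\<bar> \<le> (2 + 3*K) * G"
    by (simp add: algebra_simps)
  have tail: "\<bar>\<Sum>k=n-m..n. b k * sin ((real k + 1/2) * t)\<bar> \<le> G"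
    unfolding G_def using nonneg by (rule abs_sum_mult_sin_le)
  have "{0..n} = {0..L} \<union> {n-m..n}" "{0..L} \<inter> {n-m..n} = {}"
    using \<open>m < n\<close> unfolding L_def by auto
  then have "(\<Sum>k=0..n. b k * sin ((real k + 1/2) * t))
      = (\<Sum>k=0..L. b k * sin ((real k + 1/2) * t)) + (\<Sum>k=n-m..n. b k * sin ((real k + 1/2) * t))"
    by (simp add: sum.union_disjoint)
  then show ?thesis
    using init tail unfolding G_def[symmetric] by (simp add: algebra_simps abs_triangle_ineq order_trans[OF abs_triangle_ineq])
qed

section \<open>Set integrals over a period\<close>

lemma set_integrable_sum:
  fixes f :: "'i \<Rightarrow> 'a \<Rightarrow> 'b::{banach, second_countable_topology}"
  assumes "\<And>i. i \<in> I \<Longrightarrow> set_integrable M A (f i)"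
  shows "set_integrable M A (\<lambda>x. \<Sum>i\<in>I. f i x)"
  using assms unfolding set_integrable_def by (simp add: scaleR_sum_right)

lemma set_integral_sum:
  fixes f :: "'i \<Rightarrow> 'a \<Rightarrow> 'b::{banach, second_countable_topology}"
  assumes "\<And>i. i \<in> I \<Longrightarrow> set_integrable M A (f i)"
  shows "(LINT x:A|M. \<Sum>i\<in>I. f i x) = (\<Sum>i\<in>I. LINT x:A|M. f i x)"
  using assms unfolding set_integrable_def set_lebesgue_integral_def
  by (simp add: scaleR_sum_right integral_sum)

lemma set_integrable_mult_bounded:
  fixes f h :: "real \<Rightarrow> real"
  assumes f: "set_integrable lborel A f" and [measurable]: "h \<in> borel_measurable borel"
    and bound: "\<And>s. \<bar>h s\<bar> \<le> B"
  shows "set_integrable lborel A (\<lambda>s. f s * h s)"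
proof (rule set_integrable_bound[OF set_integrable_mult_right[OF f, of B]])
  have "(\<lambda>s. indicator A s * f s) \<in> borel_measurable lborel"
    using borel_measurable_integrable[OF f[unfolded set_integrable_def]] by simp
  then show "set_borel_measurable lborel A (\<lambda>s. f s * h s)"
    unfolding set_borel_measurable_def by (simp add: mult.assoc[symmetric])
  show "AE s in lborel. s \<in> A \<longrightarrow> norm (f s * h s) \<le> norm (B * f s)"
  proof (intro AE_I2 impI)
    fix s
    have "0 \<le> B"
      using order_trans[OF abs_ge_zero bound] .
    then show "norm (f s * h s) \<le> norm (B * f s)"
      using mult_left_mono[OF bound[of s], of "\<bar>f s\<bar>"] by (simp add: abs_mult mult.commute)
  qed
qed

lemma set_integral_translate:
  fixes g :: "real \<Rightarrow> real"
  shows "set_integrable lborel ((+) d ` A) g \<longleftrightarrow> set_integrable lborel A (\<lambda>u. g (d + u))"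
    and "(LINT s:(+) d ` A|lborel. g s) = (LINT u:A|lborel. g (d + u))"
proof -
  have ind: "indicator ((+) d ` A) (d + u) = (indicator A u :: real)" for u
    by (auto simp: indicator_def)
  show "set_integrable lborel ((+) d ` A) g \<longleftrightarrow> set_integrable lborel A (\<lambda>u. g (d + u))"
    unfolding set_integrable_def
    using lborel_integrable_real_affine_iff[of 1 "\<lambda>s. indicator ((+) d ` A) s *\<^sub>R g s" d]
    by (simp add: ind)
  show "(LINT s:(+) d ` A|lborel. g s) = (LINT u:A|lborel. g (d + u))"
    unfolding set_lebesgue_integral_def
    using lborel_integral_real_affine[of 1 "\<lambda>s. indicator ((+) d ` A) s *\<^sub>R g s" d]
    by (simp add: ind)
qed

lemma set_integral_reflect:
  fixes g :: "real \<Rightarrow> real"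
  shows "set_integrable lborel (uminus ` A) g \<longleftrightarrow> set_integrable lborel A (\<lambda>u. g (- u))"
    and "(LINT s:uminus ` A|lborel. g s) = (LINT u:A|lborel. g (- u))"
proof -
  have ind: "indicator (uminus ` A) (- u) = (indicator A u :: real)" for u
    by (auto simp: indicator_def)
  show "set_integrable lborel (uminus ` A) g \<longleftrightarrow> set_integrable lborel A (\<lambda>u. g (- u))"
    unfolding set_integrable_def
    using lborel_integrable_real_affine_iff[of "-1" "\<lambda>s. indicator (uminus ` A) s *\<^sub>R g s" 0]
    by (simp add: ind)
  show "(LINT s:uminus ` A|lborel. g s) = (LINT u:A|lborel. g (- u))"
    unfolding set_lebesgue_integral_def
    using lborel_integral_real_affine[of "-1" "\<lambda>s. indicator (uminus ` A) s *\<^sub>R g s" 0]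
    by (simp add: ind)
qed

lemma periodic_int_multiple:
  fixes g :: "real \<Rightarrow> 'a"
  assumes "\<And>s. g (s + T) = g s"
  shows "g (s + of_int j * T) = g s"
proof (induction j rule: int_induct[where k=0])
  case (step1 i)
  then show ?case
    using assms[of "s + of_int i * T"] by (simp add: algebra_simps)
next
  case (step2 i)
  then show ?case
    using assms[of "s + of_int (i - 1) * T"] by (simp add: algebra_simps)
qed simp

text \<open>Shifting \<open>c\<close> by a multiple of \<open>2\<pi>\<close> into \<open>[-\<pi>, \<pi>]\<close>, the part of \<open>[c, c + 2\<pi>)\<close> beyond \<open>\<pi>\<close>
  is moved back by one period.\<close>

lemma set_integral_periodic:
  fixes g :: "real \<Rightarrow> real"
  assumes periodic: "\<And>s. g (s + 2*pi) = g s" and [measurable]: "g \<in> borel_measurable borel"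
    and int: "set_integrable lborel {-pi..<pi} g"
  shows "set_integrable lborel {c..<c+2*pi} g"
    and "(LINT s:{c..<c+2*pi}|lborel. g s) = (LINT s:{-pi..<pi}|lborel. g s)"
proof -
  define j where "j = \<lfloor>(c + pi) / (2*pi)\<rfloor>"
  define c0 where "c0 = c - 2*pi * of_int j"
  have "of_int j \<le> (c + pi) / (2*pi)" "(c + pi) / (2*pi) < of_int j + 1"
    unfolding j_def by linarith+
  then have c0: "-pi \<le> c0" "c0 \<le> pi"
    unfolding c0_def by (simp_all add: field_simps)
  have shift_j: "g (2*pi * of_int j + u) = g u" for u
    using periodic_int_multiple[of g "2*pi" u j, OF periodic] by (simp add: algebra_simps)
  have shift_1: "g (2*pi + u) = g u" for u
    using periodic[of u] by (simp add: add.commute)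
  have c: "{c..<c+2*pi} = (+) (2*pi * of_int j) ` {c0..<c0+2*pi}"
    unfolding c0_def by (simp add: algebra_simps)
  have upper: "{pi..<c0+2*pi} = (+) (2*pi) ` {-pi..<c0}"
    by (simp add: algebra_simps)
  have int_lower: "set_integrable lborel {-pi..<c0} g" and int_mid: "set_integrable lborel {c0..<pi} g"
    by (rule set_integrable_subset[OF int]; use c0 in auto)+
  have int_upper: "set_integrable lborel {pi..<c0+2*pi} g"
    unfolding upper set_integral_translate(1) shift_1 by (rule int_lower)
  have split: "{c0..<c0+2*pi} = {c0..<pi} \<union> {pi..<c0+2*pi}" "{-pi..<pi} = {-pi..<c0} \<union> {c0..<pi}"
    using c0 by auto
  have int_c0: "set_integrable lborel {c0..<c0+2*pi} g"
    unfolding split by (intro set_integrable_Un int_mid int_upper) auto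
  then show "set_integrable lborel {c..<c+2*pi} g"
    unfolding c set_integral_translate(1) shift_j .
  have "(LINT s:{c..<c+2*pi}|lborel. g s) = (LINT s:{c0..<c0+2*pi}|lborel. g s)"
    unfolding c set_integral_translate(2) shift_j ..
  also have "\<dots> = (LINT s:{c0..<pi}|lborel. g s) + (LINT s:{pi..<c0+2*pi}|lborel. g s)"
    unfolding split(1) by (rule set_integral_Un[OF _ int_mid int_upper]) auto
  also have "(LINT s:{pi..<c0+2*pi}|lborel. g s) = (LINT s:{-pi..<c0}|lborel. g s)"
    unfolding upper set_integral_translate(2) shift_1 ..
  also have "(LINT s:{c0..<pi}|lborel. g s) + (LINT s:{-pi..<c0}|lborel. g s)
      = (LINT s:{-pi..<pi}|lborel. g s)"
    unfolding split(2) using set_integral_Un[OF _ int_lower int_mid] by (simp add: add.commute)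
  finally show "(LINT s:{c..<c+2*pi}|lborel. g s) = (LINT s:{-pi..<pi}|lborel. g s)" .
qed

lemma set_integral_periodic_symmetric:
  fixes F :: "real \<Rightarrow> real"
  assumes periodic: "\<And>s. F (s + 2*pi) = F s" and [measurable]: "F \<in> borel_measurable borel"
    and int: "set_integrable lborel {-pi..pi} F"
  shows "set_integrable lborel {0..pi} (\<lambda>u. F (x + u) + F (x - u))"
    and "(LINT s:{-pi..pi}|lborel. F s) = (LINT u:{0..pi}|lborel. F (x + u) + F (x - u))"
proof -
  have int': "set_integrable lborel {-pi..<pi} F"
    by (rule set_integrable_subset[OF int]) auto
  have centered: "{x-pi..<x-pi+2*pi} = (+) x ` {-pi..<pi}"
    by simp
  have int_shift: "set_integrable lborel {-pi..<pi} (\<lambda>u. F (x + u))"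
    using set_integral_periodic(1)[OF periodic _ int', of "x - pi"]
    unfolding centered set_integral_translate(1) by simp
  have split: "{-pi..<pi} = uminus ` {0<..pi} \<union> {0..<pi}"
    by auto
  have int_pos: "set_integrable lborel {0..<pi} (\<lambda>u. F (x + u))"
    by (rule set_integrable_subset[OF int_shift]) auto
  have "set_integrable lborel (uminus ` {0<..pi}) (\<lambda>u. F (x + u))"
    by (rule set_integrable_subset[OF int_shift]) auto
  then have int_neg: "set_integrable lborel {0<..pi} (\<lambda>u. F (x - u))"
    unfolding set_integral_reflect(1) by simp
  have "set_integrable lborel {0..pi} (\<lambda>u. F (x + u)) \<longleftrightarrow> set_integrable lborel {0..<pi} (\<lambda>u. F (x + u))"
    by (rule set_integrable_discrete_difference[where X="{pi}"]) auto
  moreover have "(LINT u:{0..<pi}|lborel. F (x + u)) = (LINT u:{0..pi}|lborel. F (x + u))"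
    by (rule set_integral_discrete_difference[where X="{pi}"]) auto
  ultimately have pos: "set_integrable lborel {0..pi} (\<lambda>u. F (x + u))"
    "(LINT u:{0..<pi}|lborel. F (x + u)) = (LINT u:{0..pi}|lborel. F (x + u))"
    using int_pos by auto
  have "set_integrable lborel {0..pi} (\<lambda>u. F (x - u)) \<longleftrightarrow> set_integrable lborel {0<..pi} (\<lambda>u. F (x - u))"
    by (rule set_integrable_discrete_difference[where X="{0}"]) auto
  moreover have "(LINT u:{0<..pi}|lborel. F (x - u)) = (LINT u:{0..pi}|lborel. F (x - u))"
    by (rule set_integral_discrete_difference[where X="{0}"]) auto
  ultimately have neg: "set_integrable lborel {0..pi} (\<lambda>u. F (x - u))"
    "(LINT u:{0<..pi}|lborel. F (x - u)) = (LINT u:{0..pi}|lborel. F (x - u))"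
    using int_neg by auto
  show "set_integrable lborel {0..pi} (\<lambda>u. F (x + u) + F (x - u))"
    using pos(1) neg(1) by (rule set_integral_add)
  have "(LINT s:{-pi..pi}|lborel. F s) = (LINT s:{-pi..<pi}|lborel. F s)"
    by (rule set_integral_discrete_difference[where X="{pi}"]) auto
  also have "\<dots> = (LINT u:{-pi..<pi}|lborel. F (x + u))"
    using set_integral_periodic(2)[OF periodic _ int', of "x - pi"]
    unfolding centered set_integral_translate(2) by simp
  also have "\<dots> = (LINT u:uminus ` {0<..pi}|lborel. F (x + u)) + (LINT u:{0..<pi}|lborel. F (x + u))"
    unfolding split
    by (rule set_integral_Un[OF _ \<open>set_integrable lborel (uminus ` {0<..pi}) (\<lambda>u. F (x + u))\<close> int_pos])
      auto
  also have "(LINT u:uminus ` {0<..pi}|lborel. F (x + u)) = (LINT u:{0<..pi}|lborel. F (x - u))"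
    unfolding set_integral_reflect(2) by simp
  also have "(LINT u:{0<..pi}|lborel. F (x - u)) + (LINT u:{0..<pi}|lborel. F (x + u))
      = (LINT u:{0..pi}|lborel. F (x + u) + F (x - u))"
    using pos neg by simp
  finally show "(LINT s:{-pi..pi}|lborel. F s) = (LINT u:{0..pi}|lborel. F (x + u) + F (x - u))" .
qed

section \<open>Integral representation of the means\<close>

lemma set_integrable_Lp_periodic:
  assumes "Lp_periodic p f" "1 \<le> p"
  shows "set_integrable lborel {-pi..pi} f"
proof -
  have [measurable]: "f \<in> borel_measurable borel"
    and int_p: "set_integrable lborel {-pi..pi} (\<lambda>t. \<bar>f t\<bar> powr p)"
    using assms(1) unfolding Lp_periodic_def by auto
  have "set_integrable lborel {-pi..pi} (\<lambda>t. 1 + \<bar>f t\<bar> powr p)"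
    using borel_integrable_atLeastAtMost'[of "-pi" pi "\<lambda>_. 1::real"] int_p by (intro set_integral_add) auto
  then show ?thesis
  proof (rule set_integrable_bound)
    show "set_borel_measurable lborel {-pi..pi} f"
      unfolding set_borel_measurable_def by measurable
    show "AE t in lborel. t \<in> {-pi..pi} \<longrightarrow> norm (f t) \<le> norm (1 + \<bar>f t\<bar> powr p)"
    proof (intro AE_I2 impI)
      fix t
      have "\<bar>f t\<bar> \<le> 1 + \<bar>f t\<bar> powr p"
      proof (cases "\<bar>f t\<bar> \<le> 1")
        case False
        then have "\<bar>f t\<bar> powr 1 \<le> \<bar>f t\<bar> powr p"
          using assms(2) by (intro powr_mono) auto
        then show ?thesis
          using False by simp
      qed (simp add: add_increasing2)
      then show "norm (f t) \<le> norm (1 + \<bar>f t\<bar> powr p)"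
        by simp
    qed
  qed
qed

lemma set_integral_dirichlet_kernel: "(LINT u:{0..pi}|lborel. dirichlet_kernel k u) = pi / 2"
proof -
  have int_cos: "set_integrable lborel {0..pi} (\<lambda>u. cos (real j * u))" for j
    by (intro borel_integrable_atLeastAtMost' continuous_intros)
  have "(LINT u:{0..pi}|lborel. cos (real j * u)) = 0" if "1 \<le> j" for j
  proof -
    have "(LBINT u=ereal 0..ereal pi. cos (real j * u)) = sin (real j * pi) / real j - sin (real j * 0) / real j"
      by (rule interval_integral_FTC_finite)
        (use that in \<open>auto intro!: continuous_intros derivative_eq_intros
          simp: has_real_derivative_iff_has_vector_derivative[symmetric]\<close>)
    then show ?thesis
      by (simp add: interval_integral_Icc zero_ereal_def)
  qed
  moreover have "(LINT u:{0..pi}|lborel. dirichlet_kernel k u)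
      = (LINT u:{0..pi}|lborel. 1/2) + (\<Sum>j=1..k. LINT u:{0..pi}|lborel. cos (real j * u))"
    unfolding dirichlet_kernel_def
    using borel_integrable_atLeastAtMost'[of 0 pi "\<lambda>_. 1/2::real"]
    by (simp add: int_cos set_integrable_sum set_integral_sum)
  ultimately show ?thesis
    by (simp add: set_integral_const)
qed

lemma partial_sum_eq_integral_dirichlet_kernel:
  assumes [measurable]: "f \<in> borel_measurable borel" and f: "set_integrable lborel {-pi..pi} f"
  shows "partial_sum f k x = (LINT s:{-pi..pi}|lborel. f s * dirichlet_kernel k (s - x)) / pi"
proof -
  have int_cos: "set_integrable lborel {-pi..pi} (\<lambda>s. f s * cos (real j * s))" for j
    by (rule set_integrable_mult_bounded[OF f _ abs_cos_le_one]) measurable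
  have int_sin: "set_integrable lborel {-pi..pi} (\<lambda>s. f s * sin (real j * s))" for j
    by (rule set_integrable_mult_bounded[OF f _ abs_sin_le_one]) measurable
  have kernel: "f s * dirichlet_kernel k (s - x) = 1/2 * f s + (\<Sum>j=1..k.
      cos (real j * x) * (f s * cos (real j * s)) + sin (real j * x) * (f s * sin (real j * s)))" for s
    unfolding dirichlet_kernel_def
    by (simp add: right_diff_distrib cos_diff algebra_simps sum_distrib_left)
  have "(LINT s:{-pi..pi}|lborel. f s * dirichlet_kernel k (s - x))
      = 1/2 * (LINT s:{-pi..pi}|lborel. f s) + (\<Sum>j=1..k.
          cos (real j * x) * (LINT s:{-pi..pi}|lborel. f s * cos (real j * s))
        + sin (real j * x) * (LINT s:{-pi..pi}|lborel. f s * sin (real j * s)))"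
    unfolding kernel by (simp add: f int_cos int_sin set_integral_sum set_integrable_sum)
  then show ?thesis
    by (simp add: partial_sum_def fourier_a_def fourier_b_def interval_integral_Icc
        add_divide_distrib sum_divide_distrib algebra_simps)
qed

lemma partial_sum_minus_eq_integral_phi:
  assumes "Lp_periodic p f" "1 \<le> p"
  shows "set_integrable lborel {0..pi} (\<lambda>u. phi f x u * dirichlet_kernel k u)"
    and "partial_sum f k x - f x = (LINT u:{0..pi}|lborel. phi f x u * dirichlet_kernel k u) / pi"
proof -
  have [measurable]: "f \<in> borel_measurable borel" and periodic: "\<And>t. f (t + 2*pi) = f t"
    using assms(1) unfolding Lp_periodic_def by auto
  have f: "set_integrable lborel {-pi..pi} f"
    by (rule set_integrable_Lp_periodic[OF assms])
  define F where "F s = f s * dirichlet_kernel k (s - x)" for s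
  have F_periodic: "F (s + 2*pi) = F s" for s
    using periodic[of s] dirichlet_kernel_periodic[of k "s - x"] unfolding F_def by (simp add: algebra_simps)
  have F_meas [measurable]: "F \<in> borel_measurable borel"
    unfolding F_def by measurable
  have F_int: "set_integrable lborel {-pi..pi} F"
    unfolding F_def by (rule set_integrable_mult_bounded[OF f _ abs_dirichlet_kernel_le]) measurable
  have F_sym: "F (x + u) + F (x - u) = phi f x u * dirichlet_kernel k u + 2 * f x * dirichlet_kernel k u" for u
    unfolding F_def phi_def by (simp add: dirichlet_kernel_minus[of k u, symmetric] algebra_simps)
  have D_int: "set_integrable lborel {0..pi} (\<lambda>u. 2 * f x * dirichlet_kernel k u)"
    by (intro set_integrable_mult_right borel_integrable_atLeastAtMost' continuous_on_dirichlet_kernel)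
  have sym_int: "set_integrable lborel {0..pi} (\<lambda>u. phi f x u * dirichlet_kernel k u + 2 * f x * dirichlet_kernel k u)"
    using set_integral_periodic_symmetric(1)[OF F_periodic F_meas F_int, of x] by (simp only: F_sym)
  have phi_eq: "phi f x u * dirichlet_kernel k u
      = (phi f x u * dirichlet_kernel k u + 2 * f x * dirichlet_kernel k u) - 2 * f x * dirichlet_kernel k u" for u
    by simp
  show int: "set_integrable lborel {0..pi} (\<lambda>u. phi f x u * dirichlet_kernel k u)"
    by (subst phi_eq, rule set_integral_diff(1)[OF sym_int D_int])
  have "pi * partial_sum f k x = (LINT s:{-pi..pi}|lborel. F s)"
    using partial_sum_eq_integral_dirichlet_kernel[OF _ f, of k x] unfolding F_def by simp
  also have "\<dots> = (LINT u:{0..pi}|lborel. F (x + u) + F (x - u))"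
    by (rule set_integral_periodic_symmetric(2)[OF F_periodic F_meas F_int])
  also have "\<dots> = (LINT u:{0..pi}|lborel. phi f x u * dirichlet_kernel k u + 2 * f x * dirichlet_kernel k u)"
    by (simp only: F_sym)
  also have "\<dots> = (LINT u:{0..pi}|lborel. phi f x u * dirichlet_kernel k u) + pi * f x"
    using int D_int by (simp add: set_integral_dirichlet_kernel)
  finally show "partial_sum f k x - f x = (LINT u:{0..pi}|lborel. phi f x u * dirichlet_kernel k u) / pi"
    by (simp add: field_simps)
qed

lemma T_mean_minus_eq_integral:
  assumes a: "lower_tri_stoch a" and f: "Lp_periodic p f" "1 \<le> p"
  shows "set_integrable lborel {0..pi} (\<lambda>u. phi f x u * mean_dirichlet_kernel (a n) n u)"
    and "T_mean a f n x - f x = (LINT u:{0..pi}|lborel. phi f x u * mean_dirichlet_kernel (a n) n u) / pi"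
proof -
  have int: "set_integrable lborel {0..pi} (\<lambda>u. a n k * (phi f x u * dirichlet_kernel k u))" for k
    using partial_sum_minus_eq_integral_phi(1)[OF f] by (rule set_integrable_mult_right)
  have kernel: "phi f x u * mean_dirichlet_kernel (a n) n u = (\<Sum>k=0..n. a n k * (phi f x u * dirichlet_kernel k u))" for u
    unfolding mean_dirichlet_kernel_def by (simp add: sum_distrib_left algebra_simps)
  show "set_integrable lborel {0..pi} (\<lambda>u. phi f x u * mean_dirichlet_kernel (a n) n u)"
    unfolding kernel by (intro set_integrable_sum int)
  have "T_mean a f n x - f x = (\<Sum>k=0..n. a n k * (partial_sum f k x - f x))"
    using a unfolding T_mean_def lower_tri_stoch_def
    by (simp add: right_diff_distrib sum_subtractf sum_distrib_right[symmetric])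
  also have "\<dots> = (\<Sum>k=0..n. LINT u:{0..pi}|lborel. a n k * (phi f x u * dirichlet_kernel k u)) / pi"
    by (simp add: partial_sum_minus_eq_integral_phi(2)[OF f] sum_divide_distrib)
  also have "\<dots> = (LINT u:{0..pi}|lborel. phi f x u * mean_dirichlet_kernel (a n) n u) / pi"
    unfolding kernel by (simp add: set_integral_sum int)
  finally show "T_mean a f n x - f x = (LINT u:{0..pi}|lborel. phi f x u * mean_dirichlet_kernel (a n) n u) / pi" .
qed

lemma abs_T_mean_minus_le_nn_integral:
  assumes "lower_tri_stoch a" "Lp_periodic p f" "1 \<le> p"
  shows "ennreal \<bar>T_mean a f n x - f x\<bar>
    \<le> ennreal (1/pi) * (\<integral>\<^sup>+t. ennreal (indicator {0..pi} t * \<bar>phi f x t * mean_dirichlet_kernel (a n) n t\<bar>) \<partial>lborel)"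
proof -
  let ?h = "\<lambda>t. phi f x t * mean_dirichlet_kernel (a n) n t"
  have "ennreal (norm (LINT t:{0..pi}|lborel. ?h t))
      \<le> (\<integral>\<^sup>+t. ennreal (norm (indicator {0..pi} t *\<^sub>R ?h t)) \<partial>lborel)"
    using integral_norm_bound_ennreal[OF T_mean_minus_eq_integral(1)[OF assms, of x n, unfolded set_integrable_def]]
    unfolding set_lebesgue_integral_def .
  also have "\<dots> = (\<integral>\<^sup>+t. ennreal (indicator {0..pi} t * \<bar>?h t\<bar>) \<partial>lborel)"
    by (intro nn_integral_cong) (simp add: abs_mult)
  finally have bound: "ennreal \<bar>LINT t:{0..pi}|lborel. ?h t\<bar>
      \<le> (\<integral>\<^sup>+t. ennreal (indicator {0..pi} t * \<bar>?h t\<bar>) \<partial>lborel)"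
    by simp
  have "ennreal \<bar>T_mean a f n x - f x\<bar> = ennreal (1/pi) * ennreal \<bar>LINT t:{0..pi}|lborel. ?h t\<bar>"
    unfolding T_mean_minus_eq_integral(2)[OF assms] by (simp add: abs_divide ennreal_mult[symmetric])
  also have "\<dots> \<le> ennreal (1/pi) * (\<integral>\<^sup>+t. ennreal (indicator {0..pi} t * \<bar>?h t\<bar>) \<partial>lborel)"
    by (rule mult_left_mono[OF bound]) simp
  finally show ?thesis .
qed

section \<open>Hoelder's inequality and the splitting of \<open>[0, \<pi>]\<close>\<close>

lemma nn_integral_mult_eq_0_of_powr:
  fixes F g :: "'a \<Rightarrow> real"
  assumes [measurable]: "F \<in> borel_measurable M" "g \<in> borel_measurable M"
    and "(\<integral>\<^sup>+x. F x powr r \<partial>M) \<le> 0" "0 < r"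
  shows "(\<integral>\<^sup>+x. F x * g x \<partial>M) = 0"
proof -
  have "AE x in M. ennreal (F x powr r) = 0"
    using assms(3) by (subst nn_integral_0_iff_AE[symmetric]) auto
  then have "AE x in M. ennreal (F x * g x) = 0"
    by eventually_elim (use assms(4) in \<open>auto simp: powr_eq_0_iff\<close>)
  then show ?thesis
    by (subst nn_integral_0_iff_AE) auto
qed

text \<open>Proved by Young's inequality applied to \<open>F / A^(1/p)\<close> and \<open>g / B^(1/q)\<close>.\<close>

lemma nn_integral_Holder:
  fixes F g :: "'a \<Rightarrow> real"
  assumes p: "1 < p" and pq: "1/p + 1/q = 1"
    and F_meas [measurable]: "F \<in> borel_measurable M" and g_meas [measurable]: "g \<in> borel_measurable M"
    and F_nonneg: "\<And>x. 0 \<le> F x" and g_nonneg: "\<And>x. 0 \<le> g x"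
    and F_le: "(\<integral>\<^sup>+x. F x powr p \<partial>M) \<le> ennreal A" and g_le: "(\<integral>\<^sup>+x. g x powr q \<partial>M) \<le> ennreal B"
  shows "(\<integral>\<^sup>+x. F x * g x \<partial>M) \<le> ennreal (A powr (1/p) * B powr (1/q))"
proof -
  have inv_q: "1/q = 1 - 1/p"
    using pq by simp
  have "0 < 1/q" "1/q < 1"
    unfolding inv_q using p by simp_all
  then have q: "1 < q"
    by (simp add: field_simps split: if_splits)
  have pos: "0 < p" "0 < q"
    using p q by simp_all
  consider "A \<le> 0" | "B \<le> 0" | "0 < A" "0 < B"
    by linarith
  then show ?thesis
  proof cases
    case 1
    then show ?thesis
      using nn_integral_mult_eq_0_of_powr[OF F_meas g_meas _ pos(1)] F_le ennreal_neg[of A] by auto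
  next
    case 2
    then show ?thesis
      using nn_integral_mult_eq_0_of_powr[OF g_meas F_meas _ pos(2)] g_le ennreal_neg[of B]
      by (auto simp: mult.commute)
  next
    case 3
    define a b where "a = A powr (1/p)" and "b = B powr (1/q)"
    have ab: "0 < a" "0 < b" "a powr p = A" "b powr q = B"
      using 3 p q by (simp_all add: a_def b_def powr_powr)
    have young: "F x * g x \<le> a * b / (p * A) * F x powr p + a * b / (q * B) * g x powr q" for x
    proof -
      have "(F x / a) * (g x / b) \<le> (F x / a) powr p / p + (g x / b) powr q / q"
        using F_nonneg[of x] g_nonneg[of x] ab p q pq by (intro Youngs_inequality) auto
      then show ?thesis
        using ab F_nonneg[of x] g_nonneg[of x] by (simp add: powr_divide field_simps)
    qed
    have "(\<integral>\<^sup>+x. F x * g x \<partial>M)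
        \<le> (\<integral>\<^sup>+x. ennreal (a * b / (p * A)) * F x powr p + ennreal (a * b / (q * B)) * g x powr q \<partial>M)"
      using young ab 3 p q
      by (intro nn_integral_mono) (simp add: ennreal_plus[symmetric] ennreal_mult[symmetric] del: ennreal_plus)
    also have "\<dots> = ennreal (a * b / (p * A)) * (\<integral>\<^sup>+x. F x powr p \<partial>M)
        + ennreal (a * b / (q * B)) * (\<integral>\<^sup>+x. g x powr q \<partial>M)"
      by (simp add: nn_integral_add nn_integral_cmult)
    also have "\<dots> \<le> ennreal (a * b / (p * A)) * ennreal A + ennreal (a * b / (q * B)) * ennreal B"
      by (intro add_mono mult_left_mono F_le g_le) auto
    also have "\<dots> = ennreal (a * b * (1/p + 1/q))"
      using ab 3 p q by (simp add: ennreal_plus[symmetric] ennreal_mult[symmetric] field_simps del: ennreal_plus)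
    finally show ?thesis
      by (simp add: pq a_def b_def)
  qed
qed

lemma nn_integral_sin_half_powr_le:
  assumes c: "0 \<le> c" "c < 1" and \<delta>: "0 < \<delta>" "\<delta> \<le> pi"
  shows "(\<integral>\<^sup>+t. ennreal (indicator {0..\<delta>} t * sin (t/2) powr (-c)) \<partial>lborel)
    \<le> ennreal (pi powr c * (\<delta> powr (1 - c) / (1 - c)))"
proof -
  have "((\<lambda>t. t powr (-c)) has_integral (\<delta> powr (1 - c) / (1 - c))) {0..\<delta>}"
    using has_integral_powr_from_0[of "-c" \<delta>] c \<delta> by simp
  then have int: "(\<integral>\<^sup>+t. ennreal (t powr (-c)) * indicator {0..\<delta>} t \<partial>lborel) = ennreal (\<delta> powr (1 - c) / (1 - c))"
    by (rule nn_integral_has_integral_lebesgue'[rotated]) simp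
  have "(\<integral>\<^sup>+t. ennreal (indicator {0..\<delta>} t * sin (t/2) powr (-c)) \<partial>lborel)
      \<le> (\<integral>\<^sup>+t. ennreal (pi powr c) * (ennreal (t powr (-c)) * indicator {0..\<delta>} t) \<partial>lborel)"
  proof (intro nn_integral_mono)
    fix t
    show "ennreal (indicator {0..\<delta>} t * sin (t/2) powr (-c))
        \<le> ennreal (pi powr c) * (ennreal (t powr (-c)) * indicator {0..\<delta>} t)"
    proof (cases "0 < t \<and> t \<le> \<delta>")
      case True
      have "sin (t/2) powr (-c) \<le> (t / pi) powr (-c)"
        using True \<delta> c sin_half_ge[of t] by (intro powr_mono2') auto
      also have "\<dots> = pi powr c * t powr (-c)"
      proof -
        have "(t / pi) powr c = t powr c / pi powr c"
          using True by (simp add: powr_divide)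
        then show ?thesis
          by (simp add: powr_minus divide_inverse mult.commute)
      qed
      finally show ?thesis
        using True by (simp add: ennreal_mult[symmetric])
    next
      case False
      then show ?thesis
        by (cases "t = 0") (auto simp: indicator_def)
    qed
  qed
  also have "\<dots> = ennreal (pi powr c * (\<delta> powr (1 - c) / (1 - c)))"
    using c by (simp add: nn_integral_cmult int ennreal_mult[symmetric])
  finally show ?thesis .
qed

lemma Icc_pi_cover:
  assumes "0 < t" "t \<le> pi" "pi / real (n+1) < t"
  obtains m where "1 \<le> m" "m \<le> n" "pi / real (m+1) \<le> t" "t \<le> pi / real m"
proof
  define m where "m = nat \<lfloor>pi / t\<rfloor>"
  have "1 \<le> pi / t" "pi / t < real (n+1)"
    using assms by (simp_all add: field_simps)
  then have "1 \<le> \<lfloor>pi / t\<rfloor>" "\<lfloor>pi / t\<rfloor> < int (n+1)"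
    by (simp_all add: le_floor_iff floor_less_iff)
  then have m: "real m \<le> pi / t" "pi / t < real m + 1" "1 \<le> m" "m < n + 1"
    unfolding m_def by (simp_all add: of_nat_nat le_nat_iff nat_less_iff)
  show "1 \<le> m" "m \<le> n"
    using m by simp_all
  show "pi / real (m+1) \<le> t" "t \<le> pi / real m"
    using m assms(1) by (simp_all add: field_simps)
qed

lemma nn_integral_Icc_pi_le_blocks:
  fixes h :: "real \<Rightarrow> real"
  assumes [measurable]: "h \<in> borel_measurable borel"
  shows "(\<integral>\<^sup>+t. ennreal (indicator {0..pi} t * \<bar>h t\<bar>) \<partial>lborel)
    \<le> (\<integral>\<^sup>+t. ennreal (indicator {0..pi / real (n+1)} t * \<bar>h t\<bar>) \<partial>lborel)
      + (\<Sum>m=1..n. \<integral>\<^sup>+t. ennreal (indicator {pi / real (m+1)..pi / real m} t * \<bar>h t\<bar>) \<partial>lborel)"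
proof -
  have "ennreal (indicator {0..pi} t * \<bar>h t\<bar>)
      \<le> ennreal (indicator {0..pi / real (n+1)} t * \<bar>h t\<bar>)
        + (\<Sum>m=1..n. ennreal (indicator {pi / real (m+1)..pi / real m} t * \<bar>h t\<bar>))" for t
  proof (cases "t \<in> {0..pi} \<and> pi / real (n+1) < t")
    case True
    then obtain m where "1 \<le> m" "m \<le> n" "pi / real (m+1) \<le> t" "t \<le> pi / real m"
      using Icc_pi_cover[of t n] pi_gt_zero by (smt (verit) atLeastAtMost_iff divide_pos_pos of_nat_0_less_iff zero_less_Suc Suc_eq_plus1)
    then have "ennreal (indicator {0..pi} t * \<bar>h t\<bar>)
        = ennreal (indicator {pi / real (m+1)..pi / real m} t * \<bar>h t\<bar>)"
      using True by simp
    also have "\<dots> \<le> (\<Sum>m=1..n. ennreal (indicator {pi / real (m+1)..pi / real m} t * \<bar>h t\<bar>))"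
      using \<open>1 \<le> m\<close> \<open>m \<le> n\<close> by (intro member_le_sum) auto
    finally show ?thesis
      by (simp add: add_increasing)
  next
    case False
    then have "indicator {0..pi} t * \<bar>h t\<bar> \<le> indicator {0..pi / real (n+1)} t * \<bar>h t\<bar>"
      by (auto simp: indicator_def)
    then show ?thesis
      by (intro add_increasing2) (auto intro: ennreal_leI)
  qed
  then have "(\<integral>\<^sup>+t. ennreal (indicator {0..pi} t * \<bar>h t\<bar>) \<partial>lborel)
    \<le> (\<integral>\<^sup>+t. ennreal (indicator {0..pi / real (n+1)} t * \<bar>h t\<bar>)
        + (\<Sum>m=1..n. ennreal (indicator {pi / real (m+1)..pi / real m} t * \<bar>h t\<bar>)) \<partial>lborel)"
    by (rule nn_integral_mono)
  also have "\<dots> = (\<integral>\<^sup>+t. ennreal (indicator {0..pi / real (n+1)} t * \<bar>h t\<bar>) \<partial>lborel)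
      + (\<integral>\<^sup>+t. (\<Sum>m=1..n. ennreal (indicator {pi / real (m+1)..pi / real m} t * \<bar>h t\<bar>)) \<partial>lborel)"
    by (rule nn_integral_add) auto
  also have "(\<integral>\<^sup>+t. (\<Sum>m=1..n. ennreal (indicator {pi / real (m+1)..pi / real m} t * \<bar>h t\<bar>)) \<partial>lborel)
      = (\<Sum>m=1..n. \<integral>\<^sup>+t. ennreal (indicator {pi / real (m+1)..pi / real m} t * \<bar>h t\<bar>) \<partial>lborel)"
    by (rule nn_integral_sum) auto
  finally show ?thesis .
qed

lemma initial_scaling_eq:
  fixes N p q \<beta> :: real
  assumes N: "0 < N" and q: "0 < q" and pq: "1/p + 1/q = 1" and \<beta>q: "\<beta> * q < 1"
  shows "N * N powr (-1/p) * (pi powr (\<beta> * q) * ((pi / N) powr (1 - \<beta> * q) / (1 - \<beta> * q))) powr (1/q)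
    = pi powr (1/q) * (1 - \<beta> * q) powr (-1/q) * N powr \<beta>"
proof -
  define c where "c = 1 - \<beta> * q"
  have c: "0 < c"
    using \<beta>q unfolding c_def by simp
  have "pi powr (\<beta> * q) * ((pi / N) powr c / c) = exp (\<beta> * q * ln pi + c * (ln pi - ln N) - ln c)"
    using N c by (simp add: powr_def exp_add exp_diff ln_div)
  moreover have "exp (ln N) * N powr (-1/p) * exp (\<beta> * q * ln pi + c * (ln pi - ln N) - ln c) powr (1/q)
      = exp (ln N + (-1/p) * ln N + (1/q) * (\<beta> * q * ln pi + c * (ln pi - ln N) - ln c))"
    using N by (simp add: powr_def mult_exp_exp del: exp_ln)
  moreover have "ln N + (-1/p) * ln N + (1/q) * (\<beta> * q * ln pi + c * (ln pi - ln N) - ln c)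
      = (1/q) * ln pi + (-1/q) * ln c + \<beta> * ln N"
  proof -
    have "ln N * (1/p + 1/q) = ln N"
      using pq by simp
    then have "ln N / p = ln N - ln N / q"
      by (simp add: distrib_left)
    then show ?thesis
      using q unfolding c_def by (simp add: field_simps)
  qed
  moreover have "exp ((1/q) * ln pi + (-1/q) * ln c + \<beta> * ln N) = pi powr (1/q) * c powr (-1/q) * N powr \<beta>"
    using N c by (simp add: powr_def mult_exp_exp algebra_simps)
  ultimately show ?thesis
    unfolding c_def using N by simp
qed

lemma block_scaling_le:
  fixes q \<beta> :: real
  assumes m: "1 \<le> m" and q: "0 < q"
  shows "real (m+1) powr \<beta> * real (m+1) * (pi / real m - pi / real (m+1)) powr (1/q)
    \<le> (2*pi) powr (1/q) * real (m+1) powr (\<beta> + 1 - 2/q)"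
proof -
  define M where "M = real (m+1)"
  have M: "0 < M" "M \<le> 2 * real m"
    using m unfolding M_def by auto
  have "pi / real m - pi / real (m+1) = pi / (real m * M)"
    using m unfolding M_def by (simp add: field_simps)
  also have "\<dots> \<le> pi / (M / 2 * M)"
    using M m by (intro divide_left_mono mult_right_mono mult_pos_pos) auto
  finally have "(pi / real m - pi / real (m+1)) powr (1/q) \<le> (2*pi / M^2) powr (1/q)"
    using m q by (intro powr_mono2) (auto simp: power2_eq_square field_simps)
  then have "M powr \<beta> * M * (pi / real m - pi / real (m+1)) powr (1/q) \<le> M powr \<beta> * M * (2*pi / M^2) powr (1/q)"
    using M by (intro mult_left_mono) auto
  also have "\<dots> = (2*pi) powr (1/q) * M powr (\<beta> + 1 - 2/q)"
  proof -
    have "ln (2*pi / M^2) = ln (2*pi) - 2 * ln M"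
      using M by (simp add: ln_div ln_realpow)
    then have "M powr \<beta> * M * (2*pi / M^2) powr (1/q) = exp (\<beta> * ln M) * exp (ln M) * exp ((1/q) * (ln (2*pi) - 2 * ln M))"
      using M by (simp add: powr_def)
    also have "\<dots> = exp ((1/q) * ln (2*pi) + (\<beta> + 1 - 2/q) * ln M)"
      by (simp add: mult_exp_exp algebra_simps)
    finally show ?thesis
      using M by (simp add: powr_def exp_add)
  qed
  finally show ?thesis
    unfolding M_def .
qed

section \<open>Functions of modulus of continuity type\<close>

lemma modulus_type_mono:
  "modulus_type \<omega> \<Longrightarrow> 0 \<le> u \<Longrightarrow> u \<le> v \<Longrightarrow> v \<le> 2*pi \<Longrightarrow> \<omega> u \<le> \<omega> v"
  unfolding modulus_type_def by (auto intro: mono_onD)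

lemma modulus_type_pos: "modulus_type \<omega> \<Longrightarrow> 0 < u \<Longrightarrow> u \<le> 2*pi \<Longrightarrow> 0 < \<omega> u"
  unfolding modulus_type_def by auto

lemma modulus_type_nonneg:
  assumes "modulus_type \<omega>" "0 \<le> u" "u \<le> 2*pi"
  shows "0 \<le> \<omega> u"
proof (cases "u = 0")
  case True
  then show ?thesis
    using assms(1) unfolding modulus_type_def by simp
next
  case False
  then show ?thesis
    using modulus_type_pos[OF assms(1), of u] assms(2,3) by simp
qed

lemma modulus_type_double:
  assumes "modulus_type \<omega>" "0 \<le> u" "u \<le> pi"
  shows "\<omega> (2 * u) \<le> 2 * \<omega> u"
proof -
  have subadditive: "\<And>d1 d2. 0 \<le> d1 \<Longrightarrow> d1 \<le> d2 \<Longrightarrow> d1 + d2 \<le> 2*pi \<Longrightarrow> \<omega> (d1 + d2) \<le> \<omega> d1 + \<omega> d2"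
    using assms(1) unfolding modulus_type_def by blast
  have "\<omega> (u + u) \<le> \<omega> u + \<omega> u"
    using assms(2,3) by (intro subadditive) auto
  then show ?thesis
    by (simp only: mult_2)
qed

lemma modulus_type_pi_div_le:
  assumes \<omega>: "modulus_type \<omega>" and "1 \<le> m" "1 \<le> j" "j \<le> 2 * m"
  shows "\<omega> (pi / real m) \<le> 2 * \<omega> (pi / real j)"
proof -
  have u: "0 \<le> pi / real j" "pi / real j \<le> pi"
    using assms by (auto simp: field_simps)
  have "pi / real m = 2 * pi / (2 * real m)"
    by simp
  also have "\<dots> \<le> 2 * pi / real j"
    using assms by (intro divide_left_mono) auto
  finally have "\<omega> (pi / real m) \<le> \<omega> (2 * (pi / real j))"
    using u by (intro modulus_type_mono[OF \<omega>]) auto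
  also have "\<dots> \<le> 2 * \<omega> (pi / real j)"
    using u by (rule modulus_type_double[OF \<omega>])
  finally show ?thesis .
qed

lemma borel_measurable_modulus_type_clamped [measurable]:
  assumes "modulus_type \<omega>"
  shows "(\<lambda>t. \<omega> (max 0 (min t (2*pi)))) \<in> borel_measurable borel"
proof (rule borel_measurable_continuous_onI)
  have "continuous_on {0..2*pi} \<omega>"
    using assms unfolding modulus_type_def by simp
  then show "continuous_on UNIV (\<lambda>t. \<omega> (max 0 (min t (2*pi))))"
    by (rule continuous_on_compose2[where g=\<omega>]) (auto intro!: continuous_intros)
qed

lemma modulus_le_weighted_mean:
  fixes w :: "nat \<Rightarrow> real"
  assumes \<omega>: "modulus_type \<omega>" and w: "\<And>k. 0 \<le> w k" "(\<Sum>k=0..n. w k) = 1"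
    and r: "\<And>k. k \<le> n \<Longrightarrow> r k \<le> n"
  shows "\<omega> (pi / real (n+1)) \<le> (\<Sum>k=0..n. w k * \<omega> (pi / real (r k + 1)))"
proof -
  have "\<omega> (pi / real (n+1)) = (\<Sum>k=0..n. w k * \<omega> (pi / real (n+1)))"
    using w(2) by (simp add: sum_distrib_right[symmetric])
  also have "\<dots> \<le> (\<Sum>k=0..n. w k * \<omega> (pi / real (r k + 1)))"
  proof (intro sum_mono mult_left_mono w(1))
    fix k assume "k \<in> {0..n}"
    then show "\<omega> (pi / real (n+1)) \<le> \<omega> (pi / real (r k + 1))"
      using r[of k] by (intro modulus_type_mono[OF \<omega>]) (auto simp: field_simps)
  qed
  finally show ?thesis .
qed

lemma modulus_mult_sum_le_weighted_mean:
  fixes w :: "nat \<Rightarrow> real"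
  assumes \<omega>: "modulus_type \<omega>" and w: "\<And>k. 0 \<le> w k"
    and "1 \<le> m" "B \<subseteq> {0..n}" and r: "\<And>k. k \<in> B \<Longrightarrow> r k \<le> m"
  shows "\<omega> (pi / real m) * (\<Sum>k\<in>B. w k) \<le> 2 * (\<Sum>k=0..n. w k * \<omega> (pi / real (r k + 1)))"
proof -
  have nonneg: "0 \<le> w k * \<omega> (pi / real (r k + 1))" for k
    using w[of k] modulus_type_nonneg[OF \<omega>, of "pi / real (r k + 1)"] by (simp add: field_simps)
  have "\<omega> (pi / real m) * (\<Sum>k\<in>B. w k) \<le> (\<Sum>k\<in>B. 2 * (w k * \<omega> (pi / real (r k + 1))))"
    unfolding sum_distrib_left
  proof (intro sum_mono)
    fix k assume "k \<in> B"
    have "\<omega> (pi / real m) \<le> 2 * \<omega> (pi / real (r k + 1))"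
      using r[OF \<open>k \<in> B\<close>] \<open>1 \<le> m\<close> by (intro modulus_type_pi_div_le[OF \<omega>]) auto
    then have "w k * \<omega> (pi / real m) \<le> w k * (2 * \<omega> (pi / real (r k + 1)))"
      by (rule mult_left_mono) (rule w)
    then show "\<omega> (pi / real m) * w k \<le> 2 * (w k * \<omega> (pi / real (r k + 1)))"
      by (simp add: algebra_simps)
  qed
  also have "\<dots> \<le> 2 * (\<Sum>k=0..n. w k * \<omega> (pi / real (r k + 1)))"
    unfolding sum_distrib_left[symmetric] using assms(4) nonneg by (intro mult_left_mono sum_mono2) auto
  finally show ?thesis .
qed

section \<open>The estimate at a fixed point\<close>

lemma le_max_zero_mult: "L \<le> K * R \<Longrightarrow> 0 \<le> (R::real) \<Longrightarrow> L \<le> max K 0 * R"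
  by (smt (verit) mult_right_mono)

context
  fixes p q \<beta> x :: real and f \<omega> :: "real \<Rightarrow> real"
  assumes p: "1 < p" and q_def: "q = p / (p - 1)" and \<beta>: "0 \<le> \<beta>" "\<beta> < 1 - 1/p"
    and f: "Lp_periodic p f" and \<omega>: "modulus_type \<omega>"
begin

lemma conjugate_exponent: "1/p + 1/q = 1" "1 < q"
  using p unfolding q_def by (auto simp: field_simps)

lemma beta_mult_q_less_1: "\<beta> * q < 1"
proof -
  have "\<beta> < 1/q"
    using \<beta>(2) conjugate_exponent(1) by simp
  then show ?thesis
    using conjugate_exponent(2) by (simp add: field_simps)
qed

text \<open>Clamping the argument of \<open>\<omega>\<close>, which is only known to be continuous on \<open>[0, 2\<pi>]\<close>, makes
  this Borel measurable; on \<open>[0, 2\<pi>]\<close> its \<open>p\<close>-th power is the integrand of \<open>wint\<close>.\<close>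

definition weighted_phi :: "real \<Rightarrow> real" where
  "weighted_phi t = \<bar>phi f x t\<bar> / \<omega> (max 0 (min t (2*pi))) * sin (t/2) powr \<beta>"

lemma borel_measurable_weighted_phi [measurable]: "weighted_phi \<in> borel_measurable borel"
proof -
  have [measurable]: "f \<in> borel_measurable borel"
    using f unfolding Lp_periodic_def by simp
  note borel_measurable_modulus_type_clamped[OF \<omega>, measurable]
  show ?thesis
    unfolding weighted_phi_def phi_def by measurable
qed

lemma weighted_phi_nonneg: "0 \<le> weighted_phi t"
  using modulus_type_nonneg[OF \<omega>, of "max 0 (min t (2*pi))"] unfolding weighted_phi_def by simp

lemma wint_eq_nn_integral:
  assumes "0 \<le> u" "v \<le> 2*pi"
  shows "wint p \<beta> f \<omega> x u v = (\<integral>\<^sup>+t. ennreal ((indicator {u..v} t * weighted_phi t) powr p) \<partial>lborel)"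
  unfolding wint_def
proof (intro nn_integral_cong)
  fix t
  show "indicator {u..v} t * ennreal ((\<bar>phi f x t\<bar> / \<omega> t) powr p * sin (t/2) powr (\<beta> * p))
      = ennreal ((indicator {u..v} t * weighted_phi t) powr p)"
  proof (cases "t \<in> {u..v}")
    case True
    then have t: "0 \<le> t" "t \<le> 2*pi"
      using assms by auto
    have "0 \<le> sin (t/2)" "0 \<le> \<omega> t"
      using t by (auto intro!: sin_ge_zero modulus_type_nonneg[OF \<omega>])
    moreover have "weighted_phi t = \<bar>phi f x t\<bar> / \<omega> t * sin (t/2) powr \<beta>"
      using t unfolding weighted_phi_def by simp
    ultimately have "weighted_phi t powr p = (\<bar>phi f x t\<bar> / \<omega> t) powr p * (sin (t/2) powr \<beta>) powr p"
      by (simp only:) (rule powr_mult; simp)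
    then have "weighted_phi t powr p = (\<bar>phi f x t\<bar> / \<omega> t) powr p * sin (t/2) powr (\<beta> * p)"
      by (simp only: powr_powr)
    then show ?thesis
      using True by simp
  qed simp
qed

lemma wint_mono: "0 \<le> u' \<Longrightarrow> u' \<le> u \<Longrightarrow> v \<le> v' \<Longrightarrow> wint p \<beta> f \<omega> x u v \<le> wint p \<beta> f \<omega> x u' v'"
  unfolding wint_def by (intro nn_integral_mono mult_right_mono) (auto simp: indicator_def)

lemma abs_phi_eq_weighted_phi:
  assumes "0 < t" "t \<le> pi"
  shows "\<bar>phi f x t\<bar> = weighted_phi t * \<omega> t * sin (t/2) powr (-\<beta>)"
proof -
  have "0 < sin (t/2)" "0 < \<omega> t"
    using assms by (auto intro!: sin_gt_zero modulus_type_pos[OF \<omega>])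
  then show ?thesis
    using assms unfolding weighted_phi_def by (simp add: powr_minus field_simps)
qed

lemma wint_initial_powr_bound:
  assumes H2: "\<exists>C. \<forall>n::nat. n \<ge> 1 \<longrightarrow> wint p \<beta> f \<omega> x 0 (2*pi / real n) \<noteq> \<infinity> \<and>
      enn2real (wint p \<beta> f \<omega> x 0 (2*pi / real n)) powr (1/p) \<le> C * real (n+1) powr (-1/p)"
  obtains C2 where "0 \<le> C2" "wint p \<beta> f \<omega> x 0 (2*pi) \<noteq> \<infinity>"
    "\<And>n. enn2real (wint p \<beta> f \<omega> x 0 (pi / real (n+1))) powr (1/p) \<le> C2 * real (n+1) powr (-1/p)"
proof -
  obtain C2 where C2: "\<And>n::nat. n \<ge> 1 \<Longrightarrow> wint p \<beta> f \<omega> x 0 (2*pi / real n) \<noteq> \<infinity> \<and>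
      enn2real (wint p \<beta> f \<omega> x 0 (2*pi / real n)) powr (1/p) \<le> C2 * real (n+1) powr (-1/p)"
    using H2 by blast
  have finite: "wint p \<beta> f \<omega> x 0 (2*pi) \<noteq> \<infinity>"
    using C2[of 1] by simp
  have "enn2real (wint p \<beta> f \<omega> x 0 (2*pi)) powr (1/p) \<le> C2 * real (1+1) powr (-1/p)"
    using C2[of 1] by simp
  then have "0 \<le> C2 * real (1+1) powr (-1/p)"
    by (rule order_trans[OF powr_ge_zero])
  then have "0 \<le> C2"
    by (simp add: zero_le_mult_iff)
  moreover have "enn2real (wint p \<beta> f \<omega> x 0 (pi / real (n+1))) powr (1/p) \<le> C2 * real (n+1) powr (-1/p)" for n
  proof -
    define n' where "n' = max n 1"
    have n': "1 \<le> n'" "n \<le> n'" "n' \<le> n + 1"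
      unfolding n'_def by auto
    have "pi / real (n+1) = 2*pi / (2 * real (n+1))"
      by (simp add: field_simps)
    also have "\<dots> \<le> 2*pi / real n'"
      using n' by (intro divide_left_mono) auto
    finally have "pi / real (n+1) \<le> 2*pi / real n'" .
    then have "wint p \<beta> f \<omega> x 0 (pi / real (n+1)) \<le> wint p \<beta> f \<omega> x 0 (2*pi / real n')"
      by (intro wint_mono) auto
    then have "enn2real (wint p \<beta> f \<omega> x 0 (pi / real (n+1))) powr (1/p)
        \<le> enn2real (wint p \<beta> f \<omega> x 0 (2*pi / real n')) powr (1/p)"
      using C2[OF n'(1)] p by (intro powr_mono2 enn2real_mono) (auto simp: top.not_eq_extremum)
    also have "\<dots> \<le> C2 * real (n'+1) powr (-1/p)"
      using C2[OF n'(1)] by simp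
    also have "\<dots> \<le> C2 * real (n+1) powr (-1/p)"
      using \<open>0 \<le> C2\<close> n' p by (intro mult_left_mono powr_mono2') auto
    finally show ?thesis .
  qed
  ultimately show ?thesis
    using finite that by blast
qed

lemma wint_finite:
  assumes "wint p \<beta> f \<omega> x 0 (2*pi) \<noteq> \<infinity>" "0 \<le> u" "v \<le> 2*pi"
  shows "wint p \<beta> f \<omega> x u v \<noteq> \<infinity>"
  using wint_mono[of 0 u v "2*pi"] assms by (auto simp: top_unique)

lemma sin_half_pi_div_powr_le:
  assumes "1 \<le> m"
  shows "sin (pi / real (m+1) / 2) powr (-\<beta>) \<le> real (m+1) powr \<beta>"
proof -
  have "1 / real (m+1) = pi / real (m+1) / pi"
    by simp
  also have "\<dots> \<le> sin (pi / real (m+1) / 2)"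
    by (rule sin_half_ge) (auto simp: field_simps)
  finally have "1 / real (m+1) \<le> sin (pi / real (m+1) / 2)" .
  then have "sin (pi / real (m+1) / 2) powr (-\<beta>) \<le> (1 / real (m+1)) powr (-\<beta>)"
    using \<beta> by (intro powr_mono2') auto
  then show ?thesis
    by (simp add: powr_minus powr_divide)
qed

lemma nn_integral_initial_le:
  assumes \<delta>: "0 < \<delta>" "\<delta> \<le> pi" and finite: "wint p \<beta> f \<omega> x 0 \<delta> \<noteq> \<infinity>"
    and [measurable]: "K \<in> borel_measurable borel" and K: "\<And>t. 0 < t \<Longrightarrow> t \<le> \<delta> \<Longrightarrow> \<bar>K t\<bar> \<le> B"
  shows "(\<integral>\<^sup>+t. ennreal (indicator {0..\<delta>} t * \<bar>phi f x t * K t\<bar>) \<partial>lborel)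
    \<le> ennreal (B * \<omega> \<delta> * (enn2real (wint p \<beta> f \<omega> x 0 \<delta>) powr (1/p)
        * (pi powr (\<beta> * q) * (\<delta> powr (1 - \<beta> * q) / (1 - \<beta> * q))) powr (1/q)))"
proof -
  let ?F = "\<lambda>t. indicator {0..\<delta>} t * weighted_phi t"
  let ?g = "\<lambda>t. indicator {0..\<delta>} t * sin (t/2) powr (-\<beta>)"
  have B: "0 \<le> B"
    using order_trans[OF abs_ge_zero K[of \<delta>]] \<delta> by simp
  have \<omega>\<delta>: "0 \<le> \<omega> \<delta>"
    using \<delta> by (intro modulus_type_nonneg[OF \<omega>]) auto
  have "ennreal (indicator {0..\<delta>} t * \<bar>phi f x t * K t\<bar>) \<le> ennreal (B * \<omega> \<delta>) * ennreal (?F t * ?g t)" for t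
  proof (cases "0 < t \<and> t \<le> \<delta>")
    case True
    have "\<bar>phi f x t * K t\<bar> = weighted_phi t * \<omega> t * sin (t/2) powr (-\<beta>) * \<bar>K t\<bar>"
      using True \<delta> by (simp add: abs_mult abs_phi_eq_weighted_phi)
    also have "\<dots> \<le> weighted_phi t * \<omega> \<delta> * sin (t/2) powr (-\<beta>) * B"
      using True \<delta> K[of t] weighted_phi_nonneg[of t] \<omega>\<delta>
      by (intro mult_mono modulus_type_mono[OF \<omega>] mult_nonneg_nonneg modulus_type_nonneg[OF \<omega>]) auto
    finally have "indicator {0..\<delta>} t * \<bar>phi f x t * K t\<bar> \<le> B * \<omega> \<delta> * (?F t * ?g t)"
      using True by (simp add: mult_ac)
    then have "ennreal (indicator {0..\<delta>} t * \<bar>phi f x t * K t\<bar>) \<le> ennreal (B * \<omega> \<delta> * (?F t * ?g t))"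
      by (rule ennreal_leI)
    also have "\<dots> = ennreal (B * \<omega> \<delta>) * ennreal (?F t * ?g t)"
      using B \<omega>\<delta> weighted_phi_nonneg[of t] by (intro ennreal_mult) auto
    finally show ?thesis .
  next
    case False
    then show ?thesis
      by (cases "t = 0") (auto simp: phi_def)
  qed
  then have "(\<integral>\<^sup>+t. ennreal (indicator {0..\<delta>} t * \<bar>phi f x t * K t\<bar>) \<partial>lborel)
      \<le> (\<integral>\<^sup>+t. ennreal (B * \<omega> \<delta>) * ennreal (?F t * ?g t) \<partial>lborel)"
    by (rule nn_integral_mono)
  also have "\<dots> = ennreal (B * \<omega> \<delta>) * (\<integral>\<^sup>+t. ennreal (?F t * ?g t) \<partial>lborel)"
    by (rule nn_integral_cmult) measurable
  also have "\<dots> \<le> ennreal (B * \<omega> \<delta>) * ennreal (enn2real (wint p \<beta> f \<omega> x 0 \<delta>) powr (1/p)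
        * (pi powr (\<beta> * q) * (\<delta> powr (1 - \<beta> * q) / (1 - \<beta> * q))) powr (1/q))"
  proof (intro mult_left_mono nn_integral_Holder[OF p conjugate_exponent(1)])
    show "(\<integral>\<^sup>+t. ennreal (?F t powr p) \<partial>lborel) \<le> ennreal (enn2real (wint p \<beta> f \<omega> x 0 \<delta>))"
      using wint_eq_nn_integral[of 0 \<delta>] finite \<delta> by (simp add: ennreal_enn2real_if)
    have "(\<integral>\<^sup>+t. ennreal (?g t powr q) \<partial>lborel)
        = (\<integral>\<^sup>+t. ennreal (indicator {0..\<delta>} t * sin (t/2) powr (- (\<beta> * q))) \<partial>lborel)"
      by (intro nn_integral_cong) (simp add: indicator_def powr_powr)
    also have "\<dots> \<le> ennreal (pi powr (\<beta> * q) * (\<delta> powr (1 - \<beta> * q) / (1 - \<beta> * q)))"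
      using \<beta> beta_mult_q_less_1 conjugate_exponent \<delta>
      by (intro nn_integral_sin_half_powr_le) auto
    finally show "(\<integral>\<^sup>+t. ennreal (?g t powr q) \<partial>lborel)
        \<le> ennreal (pi powr (\<beta> * q) * (\<delta> powr (1 - \<beta> * q) / (1 - \<beta> * q)))" .
  qed (auto simp: weighted_phi_nonneg)
  finally show ?thesis
    using B \<omega>\<delta> by (simp add: ennreal_mult[symmetric] mult_ac)
qed

lemma nn_integral_interval_le:
  assumes uv: "0 < u" "u \<le> v" "v \<le> pi" and finite: "wint p \<beta> f \<omega> x u v \<noteq> \<infinity>"
    and [measurable]: "K \<in> borel_measurable borel" and K: "\<And>t. u \<le> t \<Longrightarrow> t \<le> v \<Longrightarrow> \<bar>K t\<bar> \<le> B"
  shows "(\<integral>\<^sup>+t. ennreal (indicator {u..v} t * \<bar>phi f x t * K t\<bar>) \<partial>lborel)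
    \<le> ennreal (B * \<omega> v * sin (u/2) powr (-\<beta>) * (enn2real (wint p \<beta> f \<omega> x u v) powr (1/p) * (v - u) powr (1/q)))"
proof -
  let ?F = "\<lambda>t. indicator {u..v} t * weighted_phi t"
  let ?g = "\<lambda>t. indicator {u..v} t :: real"
  define c where "c = B * \<omega> v * sin (u/2) powr (-\<beta>)"
  have B: "0 \<le> B"
    using order_trans[OF abs_ge_zero K[of v]] uv by simp
  have c: "0 \<le> c"
    unfolding c_def using B uv by (auto intro!: mult_nonneg_nonneg modulus_type_nonneg[OF \<omega>])
  have "ennreal (indicator {u..v} t * \<bar>phi f x t * K t\<bar>) \<le> ennreal c * ennreal (?F t * ?g t)" for t
  proof (cases "t \<in> {u..v}")
    case True
    then have t: "0 < t" "t \<le> pi" "u \<le> t" "t \<le> v"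
      using uv by auto
    have "sin (u/2) \<le> sin (t/2)"
      using t uv by (intro sin_monotone_2pi_le) auto
    then have "sin (t/2) powr (-\<beta>) \<le> sin (u/2) powr (-\<beta>)"
      using \<beta> uv by (intro powr_mono2' sin_gt_zero) auto
    then have "\<bar>phi f x t * K t\<bar> \<le> weighted_phi t * \<omega> v * sin (u/2) powr (-\<beta>) * B"
      using t K[of t] weighted_phi_nonneg[of t] B uv
      unfolding abs_mult abs_phi_eq_weighted_phi[OF t(1,2)]
      by (intro mult_mono modulus_type_mono[OF \<omega>] mult_nonneg_nonneg modulus_type_nonneg[OF \<omega>]) auto
    then have "indicator {u..v} t * \<bar>phi f x t * K t\<bar> \<le> c * (?F t * ?g t)"
      using True by (simp add: c_def mult_ac)
    then have "ennreal (indicator {u..v} t * \<bar>phi f x t * K t\<bar>) \<le> ennreal (c * (?F t * ?g t))"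
      by (rule ennreal_leI)
    also have "\<dots> = ennreal c * ennreal (?F t * ?g t)"
      using c weighted_phi_nonneg[of t] by (intro ennreal_mult) auto
    finally show ?thesis .
  qed simp
  then have "(\<integral>\<^sup>+t. ennreal (indicator {u..v} t * \<bar>phi f x t * K t\<bar>) \<partial>lborel)
      \<le> (\<integral>\<^sup>+t. ennreal c * ennreal (?F t * ?g t) \<partial>lborel)"
    by (rule nn_integral_mono)
  also have "\<dots> = ennreal c * (\<integral>\<^sup>+t. ennreal (?F t * ?g t) \<partial>lborel)"
    by (rule nn_integral_cmult) measurable
  also have "\<dots> \<le> ennreal c * ennreal (enn2real (wint p \<beta> f \<omega> x u v) powr (1/p) * (v - u) powr (1/q))"
  proof (intro mult_left_mono nn_integral_Holder[OF p conjugate_exponent(1)])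
    show "(\<integral>\<^sup>+t. ennreal (?F t powr p) \<partial>lborel) \<le> ennreal (enn2real (wint p \<beta> f \<omega> x u v))"
      using wint_eq_nn_integral[of u v] finite uv by (simp add: ennreal_enn2real_if)
    have "(\<integral>\<^sup>+t. ennreal (?g t powr q) \<partial>lborel) = (\<integral>\<^sup>+t. indicator {u..v} t \<partial>lborel)"
      using conjugate_exponent by (intro nn_integral_cong) (simp add: indicator_def)
    then show "(\<integral>\<^sup>+t. ennreal (?g t powr q) \<partial>lborel) \<le> ennreal (v - u)"
      using uv by simp
  qed (auto simp: weighted_phi_nonneg)
  finally show ?thesis
    using c by (simp add: c_def ennreal_mult[symmetric] mult_ac)
qed

lemma nn_integral_block_le:
  assumes finite: "wint p \<beta> f \<omega> x 0 (2*pi) \<noteq> \<infinity>" and m: "1 \<le> m" and E: "0 \<le> E"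
    and kernel: "\<And>t. 0 < sin (t/2) \<Longrightarrow> 1 / sin (t/2) \<le> real m + 1 \<Longrightarrow>
      \<bar>\<Sum>k=0..n. w k * sin ((real k + 1/2) * t)\<bar> \<le> E"
  shows "(\<integral>\<^sup>+t. ennreal (indicator {pi / real (m+1)..pi / real m} t * \<bar>phi f x t * mean_dirichlet_kernel w n t\<bar>) \<partial>lborel)
    \<le> ennreal (E * real (m+1) / 2 * \<omega> (pi / real m) * real (m+1) powr \<beta>
      * (enn2real (wint p \<beta> f \<omega> x (pi / real (m+1)) (pi / real m)) powr (1/p)
        * (pi / real m - pi / real (m+1)) powr (1/q)))"
proof -
  define c where "c = E * real (m+1) / 2 * \<omega> (pi / real m)"
  define X where "X = enn2real (wint p \<beta> f \<omega> x (pi / real (m+1)) (pi / real m)) powr (1/p)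
    * (pi / real m - pi / real (m+1)) powr (1/q)"
  have uv: "0 < pi / real (m+1)" "pi / real (m+1) \<le> pi / real m" "pi / real m \<le> pi" "pi / real m \<le> 2*pi"
    using m by (auto simp: field_simps)
  have "(\<integral>\<^sup>+t. ennreal (indicator {pi / real (m+1)..pi / real m} t * \<bar>phi f x t * mean_dirichlet_kernel w n t\<bar>) \<partial>lborel)
      \<le> ennreal (c * sin (pi / real (m+1) / 2) powr (-\<beta>) * X)"
    unfolding c_def X_def using abs_mean_dirichlet_kernel_le_on_block[OF m _ _ kernel]
    by (intro nn_integral_interval_le uv wint_finite[OF finite] borel_measurable_mean_dirichlet_kernel) auto
  also have "\<dots> \<le> ennreal (c * real (m+1) powr \<beta> * X)"
  proof (intro ennreal_leI mult_right_mono mult_left_mono sin_half_pi_div_powr_le[OF m])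
    show "0 \<le> c"
      unfolding c_def using E uv by (intro mult_nonneg_nonneg divide_nonneg_nonneg modulus_type_nonneg[OF \<omega>]) auto
  qed (simp add: X_def)
  finally show ?thesis
    unfolding c_def X_def .
qed

lemma abs_T_mean_minus_le_sum:
  assumes a: "lower_tri_stoch a" and finite: "wint p \<beta> f \<omega> x 0 (2*pi) \<noteq> \<infinity>"
    and Ck: "0 \<le> Ck" and G_nonneg: "\<And>m. 0 \<le> G m"
    and kernel: "\<And>m t. 1 \<le> m \<Longrightarrow> m \<le> n \<Longrightarrow> 0 < sin (t/2) \<Longrightarrow> 1 / sin (t/2) \<le> real m + 1 \<Longrightarrow>
      \<bar>\<Sum>k=0..n. a n k * sin ((real k + 1/2) * t)\<bar> \<le> Ck * G m"
  shows "\<bar>T_mean a f n x - f x\<bar> \<le> (1/pi) * (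
      real (n+1) * \<omega> (pi / real (n+1)) * (enn2real (wint p \<beta> f \<omega> x 0 (pi / real (n+1))) powr (1/p)
        * (pi powr (\<beta> * q) * ((pi / real (n+1)) powr (1 - \<beta> * q) / (1 - \<beta> * q))) powr (1/q))
    + (\<Sum>m=1..n. Ck * G m * real (m+1) / 2 * \<omega> (pi / real m) * real (m+1) powr \<beta>
        * (enn2real (wint p \<beta> f \<omega> x (pi / real (m+1)) (pi / real m)) powr (1/p)
          * (pi / real m - pi / real (m+1)) powr (1/q))))"
    (is "_ \<le> (1/pi) * (?initial + (\<Sum>m=1..n. ?block m))")
proof -
  have [measurable]: "f \<in> borel_measurable borel"
    using f unfolding Lp_periodic_def by simp
  let ?K = "mean_dirichlet_kernel (a n) n"
  let ?I = "\<lambda>A. \<integral>\<^sup>+t. ennreal (indicator A t * \<bar>phi f x t * ?K t\<bar>) \<partial>lborel"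
  have w: "\<And>k. 0 \<le> a n k" "(\<Sum>k=0..n. a n k) = 1"
    using a unfolding lower_tri_stoch_def by (metis linorder_not_le order_refl)+
  have \<delta>: "0 < pi / real (n+1)" "pi / real (n+1) \<le> pi" "pi / real (n+1) \<le> 2*pi"
    by (auto simp: field_simps)
  have initial_nonneg: "0 \<le> ?initial"
    using \<delta> by (intro mult_nonneg_nonneg modulus_type_nonneg[OF \<omega>]) auto
  have block_nonneg: "0 \<le> ?block m" if "1 \<le> m" for m
  proof -
    have "pi / real m \<le> 2*pi"
      using that by (simp add: field_simps)
    then show ?thesis
      using Ck G_nonneg by (intro mult_nonneg_nonneg divide_nonneg_nonneg modulus_type_nonneg[OF \<omega>]) auto
  qed
  have "\<bar>?K t\<bar> \<le> real (n+1)" for t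
    using abs_mean_dirichlet_kernel_le[OF w, of t] by (simp add: add.commute)
  then have initial: "?I {0..pi / real (n+1)} \<le> ennreal ?initial"
    by (intro nn_integral_initial_le wint_finite[OF finite] \<delta> borel_measurable_mean_dirichlet_kernel) auto
  have block: "?I {pi / real (m+1)..pi / real m} \<le> ennreal (?block m)" if "1 \<le> m" "m \<le> n" for m
    using that Ck G_nonneg kernel[OF that] by (intro nn_integral_block_le finite) auto
  have "ennreal \<bar>T_mean a f n x - f x\<bar> \<le> ennreal (1/pi) * ?I {0..pi}"
    using abs_T_mean_minus_le_nn_integral[OF a f] p by simp
  also have "\<dots> \<le> ennreal (1/pi) * (?I {0..pi / real (n+1)} + (\<Sum>m=1..n. ?I {pi / real (m+1)..pi / real m}))"
    by (intro mult_left_mono nn_integral_Icc_pi_le_blocks) (auto simp: phi_def)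
  also have "\<dots> \<le> ennreal (1/pi) * (ennreal ?initial + (\<Sum>m=1..n. ennreal (?block m)))"
    by (intro mult_left_mono add_mono initial sum_mono block) auto
  also have "\<dots> = ennreal ((1/pi) * (?initial + (\<Sum>m=1..n. ?block m)))"
  proof -
    have "(\<Sum>m=1..n. ennreal (?block m)) = ennreal (\<Sum>m=1..n. ?block m)"
      using block_nonneg by (intro sum_ennreal) auto
    moreover have "ennreal ?initial + ennreal (\<Sum>m=1..n. ?block m) = ennreal (?initial + (\<Sum>m=1..n. ?block m))"
      using initial_nonneg block_nonneg by (intro ennreal_plus[symmetric] sum_nonneg) auto
    moreover have "ennreal (1/pi) * ennreal (?initial + (\<Sum>m=1..n. ?block m))
        = ennreal ((1/pi) * (?initial + (\<Sum>m=1..n. ?block m)))"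
      using initial_nonneg block_nonneg by (intro ennreal_mult[symmetric] add_nonneg_nonneg sum_nonneg) auto
    ultimately show ?thesis
      by simp
  qed
  finally have "ennreal \<bar>T_mean a f n x - f x\<bar> \<le> ennreal ((1/pi) * (?initial + (\<Sum>m=1..n. ?block m)))" .
  moreover have "0 \<le> (\<Sum>m=1..n. ?block m)"
    by (rule sum_nonneg) (use block_nonneg in auto)
  then have "0 \<le> (1/pi) * (?initial + (\<Sum>m=1..n. ?block m))"
    by (intro mult_nonneg_nonneg add_nonneg_nonneg initial_nonneg) simp_all
  ultimately show ?thesis
    by (simp only: ennreal_le_iff)
qed

lemma initial_term_le:
  assumes H2: "W powr (1/p) \<le> C2 * real (n+1) powr (-1/p)" and "0 \<le> C2"
    and mean: "\<omega> (pi / real (n+1)) \<le> S"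
  shows "real (n+1) * \<omega> (pi / real (n+1))
      * (W powr (1/p) * (pi powr (\<beta> * q) * ((pi / real (n+1)) powr (1 - \<beta> * q) / (1 - \<beta> * q))) powr (1/q))
    \<le> C2 * pi powr (1/q) * (1 - \<beta> * q) powr (-1/q) * (real (n+1) powr \<beta> * S)"
proof -
  define N where "N = real (n+1)"
  define V where "V = pi powr (\<beta> * q) * ((pi / N) powr (1 - \<beta> * q) / (1 - \<beta> * q))"
  have N: "0 < N" and \<omega>N: "0 \<le> \<omega> (pi / N)"
    unfolding N_def by (auto intro!: modulus_type_nonneg[OF \<omega>] simp: field_simps)
  have "N * \<omega> (pi / N) * (W powr (1/p) * V powr (1/q)) \<le> N * \<omega> (pi / N) * (C2 * N powr (-1/p) * V powr (1/q))"
    using H2 N \<omega>N unfolding N_def by (intro mult_left_mono mult_right_mono) auto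
  also have "\<dots> = C2 * \<omega> (pi / N) * (N * N powr (-1/p) * V powr (1/q))"
    by (simp add: mult_ac)
  also have "N * N powr (-1/p) * V powr (1/q) = pi powr (1/q) * (1 - \<beta> * q) powr (-1/q) * N powr \<beta>"
    unfolding V_def using N conjugate_exponent beta_mult_q_less_1 by (intro initial_scaling_eq) auto
  also have "C2 * \<omega> (pi / N) * (pi powr (1/q) * (1 - \<beta> * q) powr (-1/q) * N powr \<beta>)
      \<le> C2 * S * (pi powr (1/q) * (1 - \<beta> * q) powr (-1/q) * N powr \<beta>)"
    using \<open>0 \<le> C2\<close> mean unfolding N_def by (intro mult_right_mono mult_left_mono) auto
  finally show ?thesis
    unfolding N_def V_def by (simp add: mult_ac)
qed

lemma block_term_le:
  assumes m: "1 \<le> m" and "0 \<le> Ck" "0 \<le> S" "0 \<le> W" and block: "\<omega> (pi / real m) * G \<le> 2 * S"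
  shows "Ck * G * real (m+1) / 2 * \<omega> (pi / real m) * real (m+1) powr \<beta>
      * (W * (pi / real m - pi / real (m+1)) powr (1/q))
    \<le> Ck * (2*pi) powr (1/q) * S * (real (m+1) powr (\<beta> + 1 - 2/q) * W)"
proof -
  have "Ck * G * real (m+1) / 2 * \<omega> (pi / real m) * real (m+1) powr \<beta>
      * (W * (pi / real m - pi / real (m+1)) powr (1/q))
    = Ck / 2 * (\<omega> (pi / real m) * G) * W
      * (real (m+1) powr \<beta> * real (m+1) * (pi / real m - pi / real (m+1)) powr (1/q))"
    by (simp add: mult_ac)
  also have "\<dots> \<le> Ck / 2 * (2 * S) * W * ((2*pi) powr (1/q) * real (m+1) powr (\<beta> + 1 - 2/q))"
  proof (rule mult_mono)
    show "Ck / 2 * (\<omega> (pi / real m) * G) * W \<le> Ck / 2 * (2 * S) * W"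
      using block assms(2,4) by (intro mult_right_mono mult_left_mono) auto
    show "real (m+1) powr \<beta> * real (m+1) * (pi / real m - pi / real (m+1)) powr (1/q)
        \<le> (2*pi) powr (1/q) * real (m+1) powr (\<beta> + 1 - 2/q)"
      using conjugate_exponent(2) by (intro block_scaling_le m) simp
  qed (use assms(2-4) in auto)
  also have "\<dots> = Ck * (2*pi) powr (1/q) * S * (real (m+1) powr (\<beta> + 1 - 2/q) * W)"
    by (simp add: mult_ac)
  finally show ?thesis .
qed

lemma abs_T_mean_minus_le_const:
  assumes a: "lower_tri_stoch a" and finite: "wint p \<beta> f \<omega> x 0 (2*pi) \<noteq> \<infinity>"
    and Ck: "0 \<le> Ck" and G_nonneg: "\<And>m. 0 \<le> G m"
    and kernel: "\<And>m t. 1 \<le> m \<Longrightarrow> m \<le> n \<Longrightarrow> 0 < sin (t/2) \<Longrightarrow> 1 / sin (t/2) \<le> real m + 1 \<Longrightarrow>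
      \<bar>\<Sum>k=0..n. a n k * sin ((real k + 1/2) * t)\<bar> \<le> Ck * G m"
    and H1: "1 \<le> n \<Longrightarrow> (\<Sum>m=1..n. real (m+1) powr (\<beta> + 1 - 2/q)
        * enn2real (wint p \<beta> f \<omega> x (pi / real (m+1)) (pi / real m)) powr (1/p)) \<le> C1 * real (n+1) powr \<beta>"
    and C1: "0 \<le> C1"
    and H2: "enn2real (wint p \<beta> f \<omega> x 0 (pi / real (n+1))) powr (1/p) \<le> C2 * real (n+1) powr (-1/p)"
    and C2: "0 \<le> C2"
    and block: "\<And>m. 1 \<le> m \<Longrightarrow> m \<le> n \<Longrightarrow> \<omega> (pi / real m) * G m \<le> 2 * S"
    and mean: "\<omega> (pi / real (n+1)) \<le> S"
  shows "\<bar>T_mean a f n x - f x\<bar>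
    \<le> (1/pi) * (C2 * pi powr (1/q) * (1 - \<beta> * q) powr (-1/q) + Ck * (2*pi) powr (1/q) * C1)
      * (real (n+1) powr \<beta> * S)"
proof -
  have S: "0 \<le> S"
    using mean modulus_type_nonneg[OF \<omega>, of "pi / real (n+1)"] by (simp add: field_simps)
  have sum_blocks: "(\<Sum>m=1..n. Ck * G m * real (m+1) / 2 * \<omega> (pi / real m) * real (m+1) powr \<beta>
      * (enn2real (wint p \<beta> f \<omega> x (pi / real (m+1)) (pi / real m)) powr (1/p)
        * (pi / real m - pi / real (m+1)) powr (1/q)))
    \<le> Ck * (2*pi) powr (1/q) * C1 * (real (n+1) powr \<beta> * S)"
  proof (cases "1 \<le> n")
    case True
    have "(\<Sum>m=1..n. Ck * G m * real (m+1) / 2 * \<omega> (pi / real m) * real (m+1) powr \<beta>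
        * (enn2real (wint p \<beta> f \<omega> x (pi / real (m+1)) (pi / real m)) powr (1/p)
          * (pi / real m - pi / real (m+1)) powr (1/q)))
      \<le> Ck * (2*pi) powr (1/q) * S * (\<Sum>m=1..n. real (m+1) powr (\<beta> + 1 - 2/q)
        * enn2real (wint p \<beta> f \<omega> x (pi / real (m+1)) (pi / real m)) powr (1/p))"
      unfolding sum_distrib_left using Ck S block by (intro sum_mono block_term_le) auto
    also have "\<dots> \<le> Ck * (2*pi) powr (1/q) * S * (C1 * real (n+1) powr \<beta>)"
      using H1[OF True] Ck S by (intro mult_left_mono) auto
    finally show ?thesis
      by (simp add: mult_ac)
  qed (use Ck C1 S in simp)
  have "\<bar>T_mean a f n x - f x\<bar> \<le> (1/pi) * (
      real (n+1) * \<omega> (pi / real (n+1)) * (enn2real (wint p \<beta> f \<omega> x 0 (pi / real (n+1))) powr (1/p)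
        * (pi powr (\<beta> * q) * ((pi / real (n+1)) powr (1 - \<beta> * q) / (1 - \<beta> * q))) powr (1/q))
    + (\<Sum>m=1..n. Ck * G m * real (m+1) / 2 * \<omega> (pi / real m) * real (m+1) powr \<beta>
        * (enn2real (wint p \<beta> f \<omega> x (pi / real (m+1)) (pi / real m)) powr (1/p)
          * (pi / real m - pi / real (m+1)) powr (1/q))))"
    by (rule abs_T_mean_minus_le_sum[OF a finite Ck G_nonneg kernel])
  also have "\<dots> \<le> (1/pi) * (C2 * pi powr (1/q) * (1 - \<beta> * q) powr (-1/q) * (real (n+1) powr \<beta> * S)
      + Ck * (2*pi) powr (1/q) * C1 * (real (n+1) powr \<beta> * S))"
    using initial_term_le[OF H2 C2 mean] sum_blocks by (intro mult_left_mono add_mono) simp_all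
  finally show ?thesis
    by (simp add: algebra_simps)
qed

lemma T_mean_estimate_of_kernel_bound:
  assumes a: "lower_tri_stoch a" and finite: "wint p \<beta> f \<omega> x 0 (2*pi) \<noteq> \<infinity>"
    and H1: "\<And>n. 1 \<le> n \<Longrightarrow> (\<Sum>m=1..n. real (m+1) powr (\<beta> + 1 - 2/q)
        * enn2real (wint p \<beta> f \<omega> x (pi / real (m+1)) (pi / real m)) powr (1/p)) \<le> C1 * real (n+1) powr \<beta>"
    and C1: "0 \<le> C1"
    and H2: "\<And>n. enn2real (wint p \<beta> f \<omega> x 0 (pi / real (n+1))) powr (1/p) \<le> C2 * real (n+1) powr (-1/p)"
    and C2: "0 \<le> C2"
    and Ck: "0 \<le> Ck" and G_nonneg: "\<And>n m. 0 \<le> G n m"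
    and kernel: "\<And>n m t. 1 \<le> m \<Longrightarrow> m \<le> n \<Longrightarrow> 0 < sin (t/2) \<Longrightarrow> 1 / sin (t/2) \<le> real m + 1 \<Longrightarrow>
      \<bar>\<Sum>k=0..n. a n k * sin ((real k + 1/2) * t)\<bar> \<le> Ck * G n m"
    and block: "\<And>n m. 1 \<le> m \<Longrightarrow> m \<le> n \<Longrightarrow> \<omega> (pi / real m) * G n m \<le> 2 * S n"
    and mean: "\<And>n. \<omega> (pi / real (n+1)) \<le> S n"
  shows "\<exists>C. \<forall>n. \<bar>T_mean a f n x - f x\<bar> \<le> C * (real (n+1) powr \<beta> * S n)"
  using abs_T_mean_minus_le_const[OF a finite Ck G_nonneg kernel H1 C1 H2 C2 block mean] by blast

lemma T_mean_estimate_MRBVS: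
  assumes a: "lower_tri_stoch a" and MR: "MRBVS a" and finite: "wint p \<beta> f \<omega> x 0 (2*pi) \<noteq> \<infinity>"
    and H1: "\<And>n. 1 \<le> n \<Longrightarrow> (\<Sum>m=1..n. real (m+1) powr (\<beta> + 1 - 2/q)
        * enn2real (wint p \<beta> f \<omega> x (pi / real (m+1)) (pi / real m)) powr (1/p)) \<le> C1 * real (n+1) powr \<beta>"
    and C1: "0 \<le> C1"
    and H2: "\<And>n. enn2real (wint p \<beta> f \<omega> x 0 (pi / real (n+1))) powr (1/p) \<le> C2 * real (n+1) powr (-1/p)"
    and C2: "0 \<le> C2"
  shows "\<exists>C. \<forall>n. \<bar>T_mean a f n x - f x\<bar> \<le> C * (real (n+1) powr \<beta> * (\<Sum>k=0..n. a n k * \<omega> (pi / real (k+1))))"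
proof -
  have w: "\<And>n k. 0 \<le> a n k" "\<And>n. (\<Sum>k=0..n. a n k) = 1"
    using a unfolding lower_tri_stoch_def by (metis linorder_not_le order_refl)+
  obtain K where K: "\<And>n m. m < n \<Longrightarrow> (\<Sum>k=m..n-1. \<bar>a n k - a n (k+1)\<bar>)
      \<le> K * ((1 / real (m+1)) * (\<Sum>k\<in>{k. real m / 2 \<le> real k \<and> k \<le> m}. a n k))"
    using MR unfolding MRBVS_def by (auto simp: mult.assoc)
  have variation: "(\<Sum>k=m..n-1. \<bar>a n k - a n (k+1)\<bar>)
      \<le> max K 0 * (1 / real (m+1)) * (\<Sum>k\<in>{k. real m / 2 \<le> real k \<and> k \<le> m}. a n k)" if "m < n" for n m
    using le_max_zero_mult[OF K[OF that]] w(1) by (simp add: sum_nonneg mult.assoc)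
  show ?thesis
  proof (rule T_mean_estimate_of_kernel_bound[OF a finite H1 C1 H2 C2])
    show "\<bar>\<Sum>k=0..n. a n k * sin ((real k + 1/2) * t)\<bar> \<le> (3 + 3 * max K 0) * (\<Sum>k=0..m. a n k)"
      if "1 \<le> m" "m \<le> n" "0 < sin (t/2)" "1 / sin (t/2) \<le> real m + 1" for n m t
      using that by (intro abs_sum_mult_sin_half_le_rest_variation w variation) auto
    show "\<omega> (pi / real m) * (\<Sum>k=0..m. a n k) \<le> 2 * (\<Sum>k=0..n. a n k * \<omega> (pi / real (k+1)))"
      if "1 \<le> m" "m \<le> n" for n m
      by (rule modulus_mult_sum_le_weighted_mean[where w="a n" and r="\<lambda>k. k", OF \<omega> w(1) that(1)]) (use that in auto)
    show "\<omega> (pi / real (n+1)) \<le> (\<Sum>k=0..n. a n k * \<omega> (pi / real (k+1)))" for n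
      using modulus_le_weighted_mean[where w="a n" and r="\<lambda>k. k", OF \<omega> w(1) w(2)] by simp
  qed (auto intro: sum_nonneg w(1))
qed

lemma T_mean_estimate_MHBVS:
  assumes a: "lower_tri_stoch a" and MH: "MHBVS a" and finite: "wint p \<beta> f \<omega> x 0 (2*pi) \<noteq> \<infinity>"
    and H1: "\<And>n. 1 \<le> n \<Longrightarrow> (\<Sum>m=1..n. real (m+1) powr (\<beta> + 1 - 2/q)
        * enn2real (wint p \<beta> f \<omega> x (pi / real (m+1)) (pi / real m)) powr (1/p)) \<le> C1 * real (n+1) powr \<beta>"
    and C1: "0 \<le> C1"
    and H2: "\<And>n. enn2real (wint p \<beta> f \<omega> x 0 (pi / real (n+1))) powr (1/p) \<le> C2 * real (n+1) powr (-1/p)"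
    and C2: "0 \<le> C2"
  shows "\<exists>C. \<forall>n. \<bar>T_mean a f n x - f x\<bar> \<le> C * (real (n+1) powr \<beta> * (\<Sum>k=0..n. a n (n-k) * \<omega> (pi / real (k+1))))"
proof -
  have w: "\<And>n k. 0 \<le> a n k" "\<And>n. (\<Sum>k=0..n. a n k) = 1"
    using a unfolding lower_tri_stoch_def by (metis linorder_not_le order_refl)+
  obtain K where K: "\<And>n m. m < n \<Longrightarrow> (\<Sum>k=0..n-m-1. \<bar>a n k - a n (k+1)\<bar>)
      \<le> K * ((1 / real (m+1)) * (\<Sum>k=n-m..n. a n k))"
    using MH unfolding MHBVS_def by (auto simp: mult.assoc)
  have variation: "(\<Sum>k=0..n-m-1. \<bar>a n k - a n (k+1)\<bar>)
      \<le> max K 0 * (1 / real (m+1)) * (\<Sum>k=n-m..n. a n k)" if "m < n" for n m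
    using le_max_zero_mult[OF K[OF that]] w(1) by (simp add: sum_nonneg mult.assoc)
  have reverse: "(\<Sum>k=0..n. a n (n-k) * \<omega> (pi / real (k+1))) = (\<Sum>k=0..n. a n k * \<omega> (pi / real (n-k+1)))" for n
    by (subst sum.atLeastAtMost_rev) (auto intro: sum.cong)
  show ?thesis
    unfolding reverse
  proof (rule T_mean_estimate_of_kernel_bound[OF a finite H1 C1 H2 C2])
    show "\<bar>\<Sum>k=0..n. a n k * sin ((real k + 1/2) * t)\<bar> \<le> (3 + 3 * max K 0) * (\<Sum>k=n-m..n. a n k)"
      if "1 \<le> m" "m \<le> n" "0 < sin (t/2)" "1 / sin (t/2) \<le> real m + 1" for n m t
      using that by (intro abs_sum_mult_sin_half_le_head_variation w variation) auto
    show "\<omega> (pi / real m) * (\<Sum>k=n-m..n. a n k) \<le> 2 * (\<Sum>k=0..n. a n k * \<omega> (pi / real (n-k+1)))"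
      if "1 \<le> m" "m \<le> n" for n m
      by (rule modulus_mult_sum_le_weighted_mean[where w="a n" and r="\<lambda>k. n - k", OF \<omega> w(1) that(1)]) auto
    show "\<omega> (pi / real (n+1)) \<le> (\<Sum>k=0..n. a n k * \<omega> (pi / real (n-k+1)))" for n
      using modulus_le_weighted_mean[where w="a n" and r="\<lambda>k. n - k", OF \<omega> w(1) w(2)] by simp
  qed (auto intro: sum_nonneg w(1))
qed

end

theorem theorem2:
  fixes p q \<beta> x :: real and f \<omega> :: "real \<Rightarrow> real" and a :: "nat \<Rightarrow> nat \<Rightarrow> real"
  assumes "1 < p" and "q = p / (p - 1)" and "0 \<le> \<beta>" and "\<beta> < 1 - 1/p"
    and "Lp_periodic p f" and "modulus_type \<omega>" and "lower_tri_stoch a"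
    and H1: "\<exists>C. \<forall>n::nat. n \<ge> 1 \<longrightarrow>
       (\<Sum>m=1..n. real (m+1) powr (\<beta> + 1 - 2/q)
          * (enn2real (wint p \<beta> f \<omega> x (pi / real (m+1)) (pi / real m))) powr (1/p))
        \<le> C * real (n+1) powr \<beta>"
    and H2: "\<exists>C. \<forall>n::nat. n \<ge> 1 \<longrightarrow>
       wint p \<beta> f \<omega> x 0 (2*pi / real n) \<noteq> \<infinity> \<and>
       (enn2real (wint p \<beta> f \<omega> x 0 (2*pi / real n))) powr (1/p)
        \<le> C * real (n+1) powr (-1/p)"
  shows "(MRBVS a \<longrightarrow> (\<exists>C. \<forall>n. \<bar>T_mean a f n x - f x\<bar>
            \<le> C * (real (n+1) powr \<beta> * (\<Sum>k=0..n. a n k * \<omega> (pi / real (k+1))))))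
      \<and> (MHBVS a \<longrightarrow> (\<exists>C. \<forall>n. \<bar>T_mean a f n x - f x\<bar>
            \<le> C * (real (n+1) powr \<beta> * (\<Sum>k=0..n. a n (n-k) * \<omega> (pi / real (k+1))))))"
proof -
  note setting = assms(1-6)
  obtain C1 where "\<forall>n::nat. n \<ge> 1 \<longrightarrow> (\<Sum>m=1..n. real (m+1) powr (\<beta> + 1 - 2/q)
      * (enn2real (wint p \<beta> f \<omega> x (pi / real (m+1)) (pi / real m))) powr (1/p)) \<le> C1 * real (n+1) powr \<beta>"
    using H1 by blast
  then have H1': "\<And>n. 1 \<le> n \<Longrightarrow> (\<Sum>m=1..n. real (m+1) powr (\<beta> + 1 - 2/q)
      * enn2real (wint p \<beta> f \<omega> x (pi / real (m+1)) (pi / real m)) powr (1/p)) \<le> max C1 0 * real (n+1) powr \<beta>"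
    by (auto intro: le_max_zero_mult)
  obtain C2 where "0 \<le> C2" and finite: "wint p \<beta> f \<omega> x 0 (2*pi) \<noteq> \<infinity>"
    and H2': "\<And>n. enn2real (wint p \<beta> f \<omega> x 0 (pi / real (n+1))) powr (1/p) \<le> C2 * real (n+1) powr (-1/p)"
    using wint_initial_powr_bound[OF setting H2] by blast
  show ?thesis
    using T_mean_estimate_MRBVS[OF setting assms(7) _ finite H1' _ H2' \<open>0 \<le> C2\<close>]
      T_mean_estimate_MHBVS[OF setting assms(7) _ finite H1' _ H2' \<open>0 \<le> C2\<close>]
    by simp
qed

end
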